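(* A multiplicative unitary $V$ of multiplicity 1 on a finite-dimensional Hilbert space has only finitely many pre-subgroups.
   Context: Let $\mathcal H$ be a finite-dimensional Hilbert space and $V\in\mathcal L(\mathcal H\otimes\mathcal H)$ a multiplicative unitary ($V_{12}V_{13}V_{23}=V_{23}V_{12}$ in leg notation) of multiplicity 1, i.e. the space of vectors $\xi$ with $V(\xi\otimes\eta)=\xi\otimes\eta$ for all $\eta$ (fixed vectors) is one-dimensional. Fix a unit fixed vector $e$. A pre-subgroup of $V$ is a vector $f\in\mathcal H$ with $\|f\|=1$, $\langle f,e\rangle>0$ and $V(f\otimes f)=f\otimes f$. *)

theory Defs
  imports Complex_Main
begin

text \<open>A finite-dimensional Hilbert space is modelled as \<open>'n \<Rightarrow> complex\<close> for a finite index
type \<open>'n\<close> (i.e. \<open>\<complex>^n\<close> with the standard inner product); the tensor product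
\<open>H \<otimes> H\<close> as \<open>'n \<times> 'n \<Rightarrow> complex\<close>, and \<open>H \<otimes> H \<otimes> H\<close> as \<open>'n \<times> 'n \<times> 'n \<Rightarrow> complex\<close>.\<close>

type_synonym ('i) vect = "'i \<Rightarrow> complex"
type_synonym ('i) mat = "'i \<Rightarrow> 'i \<Rightarrow> complex"

definition inner_c :: "('i::finite) vect \<Rightarrow> 'i vect \<Rightarrow> complex" where
  "inner_c x y = (\<Sum>i\<in>UNIV. x i * cnj (y i))"

definition vnorm :: "('i::finite) vect \<Rightarrow> real" where
  "vnorm x = sqrt (\<Sum>i\<in>UNIV. (cmod (x i))\<^sup>2)"

definition tensor :: "'n vect \<Rightarrow> 'n vect \<Rightarrow> ('n \<times> 'n) vect" where
  "tensor x y = (\<lambda>(i, j). x i * y j)"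

definition mat_apply :: "('i::finite) mat \<Rightarrow> 'i vect \<Rightarrow> 'i vect" where
  "mat_apply A x = (\<lambda>p. \<Sum>q\<in>UNIV. A p q * x q)"

definition mat_mult :: "('i::finite) mat \<Rightarrow> 'i mat \<Rightarrow> 'i mat" where
  "mat_mult A B = (\<lambda>p r. \<Sum>q\<in>UNIV. A p q * B q r)"

definition mat_id :: "'i mat" where
  "mat_id = (\<lambda>p q. if p = q then 1 else 0)"

definition mat_adj :: "'i mat \<Rightarrow> 'i mat" where
  "mat_adj A = (\<lambda>p q. cnj (A q p))"

definition unitary_mat :: "('i::finite) mat \<Rightarrow> bool" where
  "unitary_mat U \<longleftrightarrow> mat_mult U (mat_adj U) = mat_id \<and> mat_mult (mat_adj U) U = mat_id"

definition leg12 :: "('n \<times> 'n) mat \<Rightarrow> ('n \<times> 'n \<times> 'n) mat" where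
  "leg12 V = (\<lambda>(i, j, k) (i', j', k'). V (i, j) (i', j') * (if k = k' then 1 else 0))"

definition leg13 :: "('n \<times> 'n) mat \<Rightarrow> ('n \<times> 'n \<times> 'n) mat" where
  "leg13 V = (\<lambda>(i, j, k) (i', j', k'). V (i, k) (i', k') * (if j = j' then 1 else 0))"

definition leg23 :: "('n \<times> 'n) mat \<Rightarrow> ('n \<times> 'n \<times> 'n) mat" where
  "leg23 V = (\<lambda>(i, j, k) (i', j', k'). V (j, k) (j', k') * (if i = i' then 1 else 0))"

definition multiplicative_unitary :: "(('n::finite) \<times> 'n) mat \<Rightarrow> bool" where
  "multiplicative_unitary V \<longleftrightarrow> unitary_mat V \<and>
     mat_mult (mat_mult (leg12 V) (leg13 V)) (leg23 V) = mat_mult (leg23 V) (leg12 V)"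

definition fixed_vectors :: "(('n::finite) \<times> 'n) mat \<Rightarrow> 'n vect set" where
  "fixed_vectors V = {\<xi>. \<forall>\<eta>. mat_apply V (tensor \<xi> \<eta>) = tensor \<xi> \<eta>}"

definition multiplicity_one :: "(('n::finite) \<times> 'n) mat \<Rightarrow> bool" where
  "multiplicity_one V \<longleftrightarrow>
     (\<exists>v::'n vect. (\<exists>i. v i \<noteq> 0) \<and> fixed_vectors V = {\<xi>. \<exists>c::complex. \<xi> = (\<lambda>i. c * v i)})"

text \<open>Pre-subgroups relative to the fixed unit fixed vector \<open>e\<close>; \<open>\<langle>f,e\<rangle> > 0\<close> means
real and strictly positive.\<close>
definition pre_subgroups :: "(('n::finite) \<times> 'n) mat \<Rightarrow> 'n vect \<Rightarrow> 'n vect set" where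
  "pre_subgroups V e = {f. vnorm f = 1 \<and> Im (inner_c f e) = 0 \<and> Re (inner_c f e) > 0 \<and>
      mat_apply V (tensor f f) = tensor f f}"

end

theory Submission
  imports Defs "HOL-Analysis.Analysis"
begin

(*
  The unit vectors g with V (g \<otimes> g) = g \<otimes> g and <g, e> real form a compact set containing the
  pre-subgroups, so it suffices to show that each of its points f is isolated. The real-linear map
  L d = (V (f \<otimes> d) + V (d \<otimes> f) - f \<otimes> d - d \<otimes> f, Re <d, f>, Im <d, e>) satisfies
  |L (g - f)| \<le> 5/2 |g - f|^2 for every g in the set, so f is isolated as soon as L is injective.

  The pentagon equation makes the slice maps x \<mapsto> (<f| \<otimes> 1) V (f \<otimes> x) and
  x \<mapsto> (1 \<otimes> <f|) V (x \<otimes> f) idempotent, and being contractions they are orthogonal projections.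
  A vector d in the kernel is fixed by both of them, and the pentagon equation once more shows that
  then w = d - c f satisfies V (w \<otimes> w) = w \<otimes> w; choosing c with <w, e> = 0 forces w = 0, and the
  remaining two conditions force c = 0.

  That no nonzero solution w of V (w \<otimes> w) = w \<otimes> w is orthogonal to e comes from the normalised
  partial trace F = (id \<otimes> tr)(V) / n: it is idempotent by the pentagon equation, its fixed vectors
  are fixed vectors of V, hence multiples of e, and n <F w, w> is the rank of the left slice
  projection of the unit vector w, which is positive.
*)

notation mat_apply (infixr "\<star>" 70)
notation tensor (infixr "\<otimes>" 75)

section \<open>Inner products on finite coordinate spaces\<close>

definition norm_sq :: "('i::finite) vect \<Rightarrow> real" where
  "norm_sq x = Re (inner_c x x)"

definition basis_vect :: "'i \<Rightarrow> 'i vect" where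
  "basis_vect j = (\<lambda>i. if i = j then 1 else 0)"

lemma inner_c_commute: "inner_c y x = cnj (inner_c x y)"
  unfolding inner_c_def by (simp add: mult.commute)

lemma norm_sq_eq_sum: "norm_sq x = (\<Sum>i\<in>UNIV. (cmod (x i))\<^sup>2)"
proof -
  have "inner_c x x = of_real (\<Sum>i\<in>UNIV. (cmod (x i))\<^sup>2)"
    unfolding inner_c_def of_real_sum by (rule sum.cong[OF refl]) (metis complex_norm_square)
  then show ?thesis unfolding norm_sq_def by simp
qed

lemma inner_c_self: "inner_c x x = of_real (norm_sq x)"
  unfolding inner_c_def norm_sq_eq_sum of_real_sum
  by (rule sum.cong[OF refl]) (metis complex_norm_square)

lemma vnorm_eq_sqrt_norm_sq: "vnorm x = sqrt (norm_sq x)"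
  unfolding vnorm_def norm_sq_eq_sum ..

lemma norm_sq_nonneg: "norm_sq x \<ge> 0"
  unfolding norm_sq_eq_sum by (simp add: sum_nonneg)

lemma norm_sq_eq_0D: "norm_sq x = 0 \<Longrightarrow> x = (\<lambda>i. 0)"
  unfolding norm_sq_eq_sum by (subst (asm) sum_nonneg_eq_0_iff) auto

lemma inner_c_self_eq_1_if_vnorm_eq_1: "vnorm e = 1 \<Longrightarrow> inner_c e e = 1"
  unfolding inner_c_self vnorm_eq_sqrt_norm_sq by simp

lemma inner_c_add_left: "inner_c (\<lambda>i. x i + y i) z = inner_c x z + inner_c y z"
  unfolding inner_c_def by (simp add: distrib_right sum.distrib)

lemma inner_c_diff_left: "inner_c (\<lambda>i. x i - y i) z = inner_c x z - inner_c y z"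
  unfolding inner_c_def by (simp add: left_diff_distrib sum_subtractf)

lemma inner_c_scale_left: "inner_c (\<lambda>i. c * x i) z = c * inner_c x z"
  unfolding inner_c_def by (simp add: sum_distrib_left mult.assoc)

lemma inner_c_zero_left: "inner_c (\<lambda>i. 0) z = 0"
  unfolding inner_c_def by simp

lemma inner_c_add_right: "inner_c z (\<lambda>i. x i + y i) = inner_c z x + inner_c z y"
  unfolding inner_c_def by (simp add: distrib_left sum.distrib)

lemma inner_c_diff_right: "inner_c z (\<lambda>i. x i - y i) = inner_c z x - inner_c z y"
  unfolding inner_c_def by (simp add: right_diff_distrib sum_subtractf)

lemma inner_c_scale_right: "inner_c z (\<lambda>i. c * x i) = cnj c * inner_c z x"
  unfolding inner_c_def by (simp add: sum_distrib_left algebra_simps)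

lemma inner_c_sum_left: "inner_c (\<lambda>i. \<Sum>c\<in>UNIV. h c i) y = (\<Sum>c\<in>UNIV. inner_c (h c) y)"
  unfolding inner_c_def by (simp add: sum_distrib_right) (rule sum.swap)

lemma sum_mult_basis_vect: "(\<Sum>k\<in>(UNIV::'i::finite set). g k * basis_vect c k) = (g c :: complex)"
proof -
  have "\<And>k. g k * basis_vect c k = (if c = k then g c else 0)" by (auto simp: basis_vect_def)
  then show ?thesis by simp
qed

lemma sum_cnj_basis_vect_mult: "(\<Sum>k\<in>(UNIV::'i::finite set). cnj (basis_vect c k) * g k) = (g c :: complex)"
proof -
  have "\<And>k. cnj (basis_vect c k) * g k = (if c = k then g c else 0)" by (auto simp: basis_vect_def)
  then show ?thesis by simp
qed

lemma inner_c_basis_vect: "inner_c x (basis_vect j) = x j"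
  unfolding inner_c_def basis_vect_def by (simp add: if_distrib cong: if_cong)

lemma norm_sq_basis_vect: "norm_sq (basis_vect j) = 1"
  unfolding norm_sq_def inner_c_basis_vect by (simp add: basis_vect_def)

lemma vect_eqI_inner_c: "(\<And>y. inner_c x y = inner_c x' y) \<Longrightarrow> x = x'"
proof
  fix j assume "\<And>y. inner_c x y = inner_c x' y"
  from this[of "basis_vect j"] show "x j = x' j" by (simp add: inner_c_basis_vect)
qed

lemma norm_sq_diff: "norm_sq (\<lambda>i. x i - y i) = norm_sq x + norm_sq y - 2 * Re (inner_c x y)"
proof -
  have "inner_c (\<lambda>i. x i - y i) (\<lambda>i. x i - y i) = inner_c x x - inner_c x y - (inner_c y x - inner_c y y)"
    by (simp add: inner_c_diff_left inner_c_diff_right)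
  moreover have "Re (inner_c y x) = Re (inner_c x y)"
    using inner_c_commute[of y x] by simp
  ultimately show ?thesis unfolding norm_sq_def by simp
qed

lemma norm_sq_add_scale:
  "norm_sq (\<lambda>i. x i + t * z i) = norm_sq x + 2 * Re (cnj t * inner_c x z) + (cmod t)\<^sup>2 * norm_sq z"
proof -
  have "inner_c (\<lambda>i. x i + t * z i) (\<lambda>i. x i + t * z i)
      = inner_c x x + cnj t * inner_c x z + t * inner_c z x + t * cnj t * inner_c z z"
    by (simp add: inner_c_add_left inner_c_add_right inner_c_scale_left inner_c_scale_right algebra_simps)
  moreover have "Re (t * inner_c z x) = Re (cnj t * inner_c x z)"
    by (subst inner_c_commute) (metis complex_cnj_cnj complex_cnj_mult cnj.sel(1))
  moreover have "t * cnj t * inner_c z z = of_real ((cmod t)\<^sup>2 * norm_sq z)"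
    using complex_norm_square[of t] by (simp add: inner_c_self)
  ultimately show ?thesis unfolding norm_sq_def by simp
qed

lemma Re_inner_c_le: "Re (inner_c x y) \<le> (norm_sq x + norm_sq y) / 2"
  using norm_sq_diff[of x y] norm_sq_nonneg[of "\<lambda>i. x i - y i"] by simp

lemma eq_if_Re_inner_c_eq:
  assumes "norm_sq x = norm_sq y" and "Re (inner_c x y) = norm_sq x"
  shows "x = y"
proof -
  have "norm_sq (\<lambda>i. x i - y i) = 0" using norm_sq_diff[of x y] assms by simp
  then have "\<And>i. x i - y i = 0" by (metis norm_sq_eq_0D)
  then show "x = y" by auto
qed

lemma Re_inner_c_eq_if_unit_sum:
  assumes "inner_c f f = 1" and "inner_c (\<lambda>i. f i + d i) (\<lambda>i. f i + d i) = 1"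
  shows "Re (inner_c d f) = - norm_sq d / 2"
proof -
  have "inner_c f d + inner_c d f + inner_c d d = 0"
    using assms unfolding inner_c_add_left inner_c_add_right by (simp add: algebra_simps)
  then have "Re (inner_c f d) + Re (inner_c d f) + norm_sq d = 0"
    unfolding norm_sq_def by (metis plus_complex.sel(1) zero_complex.sel(1))
  moreover have "Re (inner_c f d) = Re (inner_c d f)"
    using inner_c_commute[of f d] by simp
  ultimately show ?thesis by simp
qed

lemma ex_nonzero_if_inner_c_self_eq_1: "inner_c f f = 1 \<Longrightarrow> \<exists>j. f j \<noteq> 0"
  using inner_c_zero_left[of f] by (metis (no_types, lifting) ext zero_neq_one)

lemma eq_swap_if_orthogonal:
  assumes sum: "\<And>p. X p + Y p = A p + B p"
    and XA: "norm_sq X = norm_sq A" and YB: "norm_sq Y = norm_sq B"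
    and "inner_c X A = 0" and "inner_c Y B = 0" and AB: "inner_c A B = 0"
  shows "X = B" and "Y = A"
proof -
  have BA: "inner_c B A = 0" using AB inner_c_commute[of A B] by simp
  have X_eq: "X = (\<lambda>p. A p + B p - Y p)" and Y_eq: "Y = (\<lambda>p. A p + B p - X p)"
    using sum by (auto simp: fun_eq_iff algebra_simps)
  have "inner_c X B = inner_c B B"
    by (subst X_eq) (simp add: inner_c_diff_left inner_c_add_left AB \<open>inner_c Y B = 0\<close>)
  moreover have "inner_c Y A = inner_c A A"
    by (subst Y_eq) (simp add: inner_c_diff_left inner_c_add_left BA \<open>inner_c X A = 0\<close>)
  ultimately have "norm_sq (\<lambda>p. X p - B p) = norm_sq A - norm_sq B"
    and "norm_sq (\<lambda>p. Y p - A p) = norm_sq B - norm_sq A"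
    using norm_sq_diff[of X B] norm_sq_diff[of Y A] XA YB unfolding norm_sq_def by simp_all
  then have "norm_sq (\<lambda>p. X p - B p) = 0" and "norm_sq (\<lambda>p. Y p - A p) = 0"
    using norm_sq_nonneg[of "\<lambda>p. X p - B p"] norm_sq_nonneg[of "\<lambda>p. Y p - A p"] by linarith+
  then have "\<And>p. X p - B p = 0" and "\<And>p. Y p - A p = 0"
    by (metis norm_sq_eq_0D)+
  then show "X = B" and "Y = A" by auto
qed

lemma inner_c_orthogonal_if_contraction_projection:
  fixes T :: "('i::finite) vect \<Rightarrow> 'i vect"
  assumes linear: "\<And>x z t. T (\<lambda>i. x i + t * z i) = (\<lambda>i. T x i + t * T z i)"
    and contraction: "\<And>w. norm_sq (T w) \<le> norm_sq w"
    and "T x = x" and "T z = (\<lambda>i. 0)"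
  shows "inner_c x z = 0"
proof (rule ccontr)
  define c where "c = inner_c x z"
  assume "inner_c x z \<noteq> 0"
  then have c_pos: "(cmod c)\<^sup>2 > 0" unfolding c_def by simp
  define s :: real where "s = 1 / (norm_sq z + 1)"
  have s_pos: "s > 0" and s_small: "s * norm_sq z < 1"
    unfolding s_def using norm_sq_nonneg[of z] by (simp_all add: field_simps)
  define t where "t = - (of_real s * c)"
  \<comment> \<open>\<open>x + t z\<close> is mapped to \<open>x\<close>, but is strictly shorter than \<open>x\<close> for this small \<open>t\<close>.\<close>
  have "T (\<lambda>i. x i + t * z i) = x" using linear[of x t z] assms(3,4) by simp
  then have "norm_sq x \<le> norm_sq (\<lambda>i. x i + t * z i)" using contraction by metis
  then have "0 \<le> 2 * Re (cnj t * c) + (cmod t)\<^sup>2 * norm_sq z"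
    unfolding norm_sq_add_scale c_def by simp
  also have "2 * Re (cnj t * c) + (cmod t)\<^sup>2 * norm_sq z = s * (cmod c)\<^sup>2 * (s * norm_sq z - 2)"
    unfolding t_def using s_pos cmod_power2[of c]
    by (simp add: norm_mult power_mult_distrib power2_eq_square algebra_simps)
  also have "\<dots> < 0"
    using s_pos s_small c_pos by (simp add: mult_pos_neg)
  finally show False by simp
qed

section \<open>Tensors and matrices\<close>

lemma sum_UNIV_prod:
  "(\<Sum>p\<in>(UNIV::('a::finite \<times> 'b::finite) set). g p) = (\<Sum>i\<in>UNIV. \<Sum>j\<in>UNIV. g (i, j))"
  by (subst sum.cartesian_product) simp

lemma inner_c_prod:
  "inner_c (X :: ('a::finite \<times> 'b::finite) vect) Y = (\<Sum>i\<in>UNIV. \<Sum>j\<in>UNIV. X (i, j) * cnj (Y (i, j)))"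
  unfolding inner_c_def by (simp add: sum_UNIV_prod)

lemma tensor_apply: "(x \<otimes> y) q = x (fst q) * y (snd q)"
  unfolding tensor_def by (simp add: case_prod_beta)

lemma inner_c_tensor: "inner_c (a \<otimes> b) (c \<otimes> d) = inner_c a c * inner_c b d"
  unfolding inner_c_prod tensor_def inner_c_def by (simp add: sum_product mult_ac)

lemma norm_sq_tensor: "norm_sq (a \<otimes> b) = norm_sq a * norm_sq b"
  unfolding norm_sq_def inner_c_tensor by (simp add: inner_c_self)

lemma tensor_add_left: "(\<lambda>i. x i + y i) \<otimes> a = (\<lambda>p. (x \<otimes> a) p + (y \<otimes> a) p)"
  unfolding tensor_def by (auto simp: distrib_right)

lemma tensor_add_right: "a \<otimes> (\<lambda>i. x i + y i) = (\<lambda>p. (a \<otimes> x) p + (a \<otimes> y) p)"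
  unfolding tensor_def by (auto simp: distrib_left)

lemma tensor_diff_left: "(\<lambda>i. x i - y i) \<otimes> a = (\<lambda>p. (x \<otimes> a) p - (y \<otimes> a) p)"
  unfolding tensor_def by (auto simp: left_diff_distrib)

lemma tensor_diff_right: "a \<otimes> (\<lambda>i. x i - y i) = (\<lambda>p. (a \<otimes> x) p - (a \<otimes> y) p)"
  unfolding tensor_def by (auto simp: right_diff_distrib)

lemma tensor_scale_left: "(\<lambda>i. c * x i) \<otimes> a = (\<lambda>p. c * (x \<otimes> a) p)"
  unfolding tensor_def by (auto simp: mult_ac)

lemma tensor_scale_right: "a \<otimes> (\<lambda>i. c * x i) = (\<lambda>p. c * (a \<otimes> x) p)"
  unfolding tensor_def by (auto simp: mult_ac)

lemma tensor_cancel_left: "c j \<noteq> 0 \<Longrightarrow> x \<otimes> c = y \<otimes> c \<Longrightarrow> x = y"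
proof
  fix i assume c: "c j \<noteq> 0" and eq: "x \<otimes> c = y \<otimes> c"
  from fun_cong[OF eq, of "(i, j)"] c show "x i = y i" unfolding tensor_def by simp
qed

lemma tensor_basis_vect: "basis_vect b \<otimes> basis_vect c = basis_vect (b, c)"
  unfolding tensor_def basis_vect_def by (auto simp: fun_eq_iff)

lemma tensor_eq_sum_basis_vect: "f \<otimes> (x :: ('i::finite) vect) = (\<lambda>p. \<Sum>j\<in>UNIV. x j * (f \<otimes> basis_vect j) p)"
proof
  fix p :: "'i \<times> 'i"
  have "(\<Sum>j\<in>UNIV. x j * (f \<otimes> basis_vect j) p) = f (fst p) * (\<Sum>j\<in>UNIV. x j * basis_vect j (snd p))"
    unfolding tensor_apply by (simp add: sum_distrib_left mult_ac)
  also have "(\<Sum>j\<in>UNIV. x j * basis_vect j (snd p)) = x (snd p)"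
    using sum_mult_basis_vect[of x "snd p"] unfolding basis_vect_def by (simp add: eq_commute)
  finally show "(f \<otimes> x) p = (\<Sum>j\<in>UNIV. x j * (f \<otimes> basis_vect j) p)"
    unfolding tensor_apply by simp
qed

lemma mat_apply_add: "A \<star> (\<lambda>i. x i + y i) = (\<lambda>p. (A \<star> x) p + (A \<star> y) p)"
  unfolding mat_apply_def by (simp add: distrib_left sum.distrib)

lemma mat_apply_diff: "A \<star> (\<lambda>i. x i - y i) = (\<lambda>p. (A \<star> x) p - (A \<star> y) p)"
  unfolding mat_apply_def by (simp add: right_diff_distrib sum_subtractf)

lemma mat_apply_scale: "A \<star> (\<lambda>i. c * x i) = (\<lambda>p. c * (A \<star> x) p)"
  unfolding mat_apply_def by (simp add: sum_distrib_left algebra_simps)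

lemma mat_apply_sum: "A \<star> (\<lambda>i. \<Sum>c\<in>UNIV. h c i) = (\<lambda>p. \<Sum>c\<in>UNIV. (A \<star> h c) p)"
  unfolding mat_apply_def by (rule ext) (simp add: sum_distrib_left, rule sum.swap)

lemma mat_apply_basis_vect: "(A \<star> basis_vect q) p = A p q"
  unfolding mat_apply_def using sum_mult_basis_vect[of "A p" q] by simp

lemma mat_apply_mult: "mat_mult A B \<star> x = A \<star> B \<star> x"
proof
  fix p
  have "(mat_mult A B \<star> x) p = (\<Sum>q\<in>UNIV. \<Sum>r\<in>UNIV. A p r * B r q * x q)"
    unfolding mat_apply_def mat_mult_def by (simp add: sum_distrib_right)
  also have "\<dots> = (\<Sum>r\<in>UNIV. \<Sum>q\<in>UNIV. A p r * B r q * x q)" by (rule sum.swap)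
  also have "\<dots> = (A \<star> B \<star> x) p"
    unfolding mat_apply_def by (simp add: sum_distrib_left mult.assoc)
  finally show "(mat_mult A B \<star> x) p = (A \<star> B \<star> x) p" .
qed

lemma mat_apply_id: "mat_id \<star> x = x"
proof
  fix p
  have "\<And>q. (if p = q then 1 else 0) * x q = (if p = q then x p else 0)" by simp
  then show "(mat_id \<star> x) p = x p" unfolding mat_apply_def mat_id_def by simp
qed

lemma inner_c_mat_apply_adj: "inner_c (A \<star> x) y = inner_c x (mat_adj A \<star> y)"
proof -
  have "inner_c (A \<star> x) y = (\<Sum>p\<in>UNIV. \<Sum>q\<in>UNIV. A p q * x q * cnj (y p))"
    unfolding inner_c_def mat_apply_def by (simp add: sum_distrib_right)
  also have "\<dots> = (\<Sum>q\<in>UNIV. \<Sum>p\<in>UNIV. A p q * x q * cnj (y p))" by (rule sum.swap)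
  also have "\<dots> = inner_c x (mat_adj A \<star> y)"
    unfolding inner_c_def mat_apply_def mat_adj_def by (simp add: sum_distrib_left mult_ac)
  finally show ?thesis .
qed

lemma unitary_mat_adj: "unitary_mat U \<Longrightarrow> unitary_mat (mat_adj U)"
  unfolding unitary_mat_def mat_adj_def by (simp add: fun_eq_iff)

lemma unitary_apply_adj: "unitary_mat U \<Longrightarrow> U \<star> mat_adj U \<star> x = x"
  unfolding unitary_mat_def by (metis mat_apply_mult mat_apply_id)

lemma unitary_adj_apply: "unitary_mat U \<Longrightarrow> mat_adj U \<star> U \<star> x = x"
  unfolding unitary_mat_def by (metis mat_apply_mult mat_apply_id)

lemma unitary_inner_c: "unitary_mat U \<Longrightarrow> inner_c (U \<star> x) (U \<star> y) = inner_c x y"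
  by (simp add: inner_c_mat_apply_adj unitary_adj_apply)

lemma unitary_norm_sq: "unitary_mat U \<Longrightarrow> norm_sq (U \<star> x) = norm_sq x"
  by (simp add: norm_sq_def unitary_inner_c)

lemma unitary_apply_inj: "unitary_mat U \<Longrightarrow> U \<star> x = U \<star> y \<Longrightarrow> x = y"
  by (metis unitary_adj_apply)

lemma unitary_adj_fixed: "unitary_mat U \<Longrightarrow> U \<star> x = x \<Longrightarrow> mat_adj U \<star> x = x"
  by (metis unitary_adj_apply)

section \<open>Legs of operators on the threefold tensor product\<close>

definition tensor3 :: "'n vect \<Rightarrow> 'n vect \<Rightarrow> 'n vect \<Rightarrow> ('n \<times> 'n \<times> 'n) vect" where
  "tensor3 a b c = (\<lambda>(i, j, k). a i * b j * c k)"

definition tensor12 :: "('n \<times> 'n) vect \<Rightarrow> 'n vect \<Rightarrow> ('n \<times> 'n \<times> 'n) vect" where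
  "tensor12 X c = (\<lambda>(i, j, k). X (i, j) * c k)"

definition tensor23 :: "'n vect \<Rightarrow> ('n \<times> 'n) vect \<Rightarrow> ('n \<times> 'n \<times> 'n) vect" where
  "tensor23 a Y = (\<lambda>(i, j, k). a i * Y (j, k))"

definition tensor13 :: "('n \<times> 'n) vect \<Rightarrow> 'n vect \<Rightarrow> ('n \<times> 'n \<times> 'n) vect" where
  "tensor13 X b = (\<lambda>(i, j, k). X (i, k) * b j)"

lemma tensor3_eq_tensor12: "tensor3 a b c = tensor12 (a \<otimes> b) c"
  unfolding tensor3_def tensor12_def tensor_def by auto

lemma tensor3_eq_tensor23: "tensor3 a b c = tensor23 a (b \<otimes> c)"
  unfolding tensor3_def tensor23_def tensor_def by (auto simp: mult.assoc)

lemma tensor3_eq_tensor13: "tensor3 a b c = tensor13 (a \<otimes> c) b"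
  unfolding tensor3_def tensor13_def tensor_def by (auto simp: mult_ac)

lemma sum_UNIV_prod3:
  "(\<Sum>p\<in>(UNIV::('a::finite \<times> 'b::finite \<times> 'c::finite) set). g p)
    = (\<Sum>i\<in>UNIV. \<Sum>j\<in>UNIV. \<Sum>k\<in>UNIV. g (i, j, k))"
  by (simp add: sum_UNIV_prod)

lemma inner_c_prod3:
  "inner_c (X :: ('a::finite \<times> 'b::finite \<times> 'c::finite) vect) Y
    = (\<Sum>i\<in>UNIV. \<Sum>j\<in>UNIV. \<Sum>k\<in>UNIV. X (i, j, k) * cnj (Y (i, j, k)))"
  unfolding inner_c_def by (rule sum_UNIV_prod3)

lemma sum_mult_delta: "(\<Sum>k'\<in>(UNIV::'a::finite set). a k' * (if k = k' then 1 else 0)) = (a k :: complex)"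
proof -
  have "\<And>k'. a k' * (if k = k' then 1 else 0) = (if k = k' then a k else 0)" by simp
  then show ?thesis by (simp add: sum.delta')
qed

lemma leg12_apply:
  "(leg12 V \<star> X) (i, j, k) = (\<Sum>i'\<in>UNIV. \<Sum>j'\<in>UNIV. V (i, j) (i', j') * X (i', j', k))"
proof -
  have "(leg12 V \<star> X) (i, j, k)
      = (\<Sum>i'\<in>UNIV. \<Sum>j'\<in>UNIV. \<Sum>k'\<in>UNIV. (V (i, j) (i', j') * X (i', j', k')) * (if k = k' then 1 else 0))"
    unfolding mat_apply_def leg12_def sum_UNIV_prod3 by (simp add: mult_ac)
  then show ?thesis by (simp only: sum_mult_delta)
qed

lemma leg23_apply:
  "(leg23 V \<star> X) (i, j, k) = (\<Sum>j'\<in>UNIV. \<Sum>k'\<in>UNIV. V (j, k) (j', k') * X (i, j', k'))"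
proof -
  have "(leg23 V \<star> X) (i, j, k)
      = (\<Sum>i'\<in>UNIV. (\<Sum>j'\<in>UNIV. \<Sum>k'\<in>UNIV. V (j, k) (j', k') * X (i', j', k')) * (if i = i' then 1 else 0))"
    unfolding mat_apply_def leg23_def sum_UNIV_prod3 by (simp add: mult_ac sum_distrib_left)
  then show ?thesis by (simp only: sum_mult_delta)
qed

lemma leg13_apply:
  "(leg13 V \<star> X) (i, j, k) = (\<Sum>i'\<in>UNIV. \<Sum>k'\<in>UNIV. V (i, k) (i', k') * X (i', j, k'))"
proof -
  have "(leg13 V \<star> X) (i, j, k)
      = (\<Sum>i'\<in>UNIV. \<Sum>j'\<in>UNIV. \<Sum>k'\<in>UNIV. (V (i, k) (i', k') * X (i', j', k')) * (if j = j' then 1 else 0))"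
    unfolding mat_apply_def leg13_def sum_UNIV_prod3 by (simp add: mult_ac)
  also have "\<dots> = (\<Sum>i'\<in>UNIV. \<Sum>j'\<in>UNIV. (\<Sum>k'\<in>UNIV. V (i, k) (i', k') * X (i', j', k')) * (if j = j' then 1 else 0))"
    by (simp add: sum_distrib_right)
  finally show ?thesis by (simp only: sum_mult_delta)
qed

lemma leg12_apply_tensor12: "leg12 V \<star> tensor12 X c = tensor12 (V \<star> X) c"
proof
  fix p :: "'a \<times> 'a \<times> 'a"
  obtain i j k where p: "p = (i, j, k)" by (cases p) auto
  show "(leg12 V \<star> tensor12 X c) p = tensor12 (V \<star> X) c p"
    unfolding p leg12_apply unfolding tensor12_def mat_apply_def sum_UNIV_prod
    by (simp add: sum_distrib_right mult.assoc)
qed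

lemma leg23_apply_tensor23: "leg23 V \<star> tensor23 a Y = tensor23 a (V \<star> Y)"
proof
  fix p :: "'a \<times> 'a \<times> 'a"
  obtain i j k where p: "p = (i, j, k)" by (cases p) auto
  show "(leg23 V \<star> tensor23 a Y) p = tensor23 a (V \<star> Y) p"
    unfolding p leg23_apply unfolding tensor23_def mat_apply_def sum_UNIV_prod
    by (simp add: sum_distrib_left mult_ac)
qed

lemma leg13_apply_tensor13: "leg13 V \<star> tensor13 X b = tensor13 (V \<star> X) b"
proof
  fix p :: "'a \<times> 'a \<times> 'a"
  obtain i j k where p: "p = (i, j, k)" by (cases p) auto
  show "(leg13 V \<star> tensor13 X b) p = tensor13 (V \<star> X) b p"
    unfolding p leg13_apply unfolding tensor13_def mat_apply_def sum_UNIV_prod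
    by (simp add: sum_distrib_left mult_ac)
qed

lemma mat_adj_leg12: "mat_adj (leg12 V) = leg12 (mat_adj V)"
  unfolding mat_adj_def leg12_def by (auto simp: fun_eq_iff)

lemma mat_adj_leg23: "mat_adj (leg23 V) = leg23 (mat_adj V)"
  unfolding mat_adj_def leg23_def by (auto simp: fun_eq_iff)

lemma mat_adj_leg13: "mat_adj (leg13 V) = leg13 (mat_adj V)"
  unfolding mat_adj_def leg13_def by (auto simp: fun_eq_iff)

lemma leg12_apply_slice: "(leg12 A \<star> X) (i, j, k) = (A \<star> (\<lambda>q. X (fst q, snd q, k))) (i, j)"
  unfolding leg12_apply unfolding mat_apply_def sum_UNIV_prod by simp

lemma unitary_leg12_adj_apply:
  assumes "unitary_mat V"
  shows "leg12 (mat_adj V) \<star> leg12 V \<star> X = X"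
proof
  fix p :: "'a \<times> 'a \<times> 'a"
  obtain i j k where p: "p = (i, j, k)" by (cases p) auto
  have "(\<lambda>q. (leg12 V \<star> X) (fst q, snd q, k)) = V \<star> (\<lambda>q. X (fst q, snd q, k))"
    by (rule ext) (simp add: leg12_apply_slice)
  then show "(leg12 (mat_adj V) \<star> leg12 V \<star> X) p = X p"
    unfolding p leg12_apply_slice by (simp add: unitary_adj_apply[OF assms])
qed

lemma inner_c_tensor12: "inner_c (tensor12 X c) (tensor12 Y d) = inner_c X Y * inner_c c d"
  unfolding inner_c_def tensor12_def sum_UNIV_prod3 sum_UNIV_prod[of "\<lambda>q. X q * cnj (Y q)"]
  by (simp add: sum_product sum_distrib_left sum_distrib_right mult_ac)

lemma inner_c_tensor23: "inner_c (tensor23 a X) (tensor23 b Y) = inner_c a b * inner_c X Y"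
proof -
  have "inner_c a b * inner_c X Y
      = (\<Sum>i\<in>UNIV. a i * cnj (b i) * (\<Sum>j\<in>UNIV. \<Sum>k\<in>UNIV. X (j, k) * cnj (Y (j, k))))"
    unfolding inner_c_def[of a] inner_c_prod[of X] by (simp only: sum_distrib_right)
  also have "\<dots> = (\<Sum>i\<in>UNIV. \<Sum>j\<in>UNIV. \<Sum>k\<in>UNIV. a i * cnj (b i) * (X (j, k) * cnj (Y (j, k))))"
    by (simp only: sum_distrib_left)
  also have "\<dots> = inner_c (tensor23 a X) (tensor23 b Y)"
    unfolding inner_c_prod3 tensor23_def by (simp add: mult_ac)
  finally show ?thesis by simp
qed

lemma inner_c_tensor23_tensor13:
  "inner_c (tensor23 a W) (tensor13 Z b) = inner_c (a \<otimes> (\<lambda>k. \<Sum>j\<in>UNIV. cnj (b j) * W (j, k))) Z"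
proof -
  have "inner_c (a \<otimes> (\<lambda>k. \<Sum>j\<in>UNIV. cnj (b j) * W (j, k))) Z
     = (\<Sum>i\<in>UNIV. \<Sum>k\<in>UNIV. \<Sum>j\<in>UNIV. a i * (cnj (b j) * W (j, k)) * cnj (Z (i, k)))"
    unfolding inner_c_prod tensor_def by (simp add: sum_distrib_left sum_distrib_right)
  also have "\<dots> = (\<Sum>i\<in>UNIV. \<Sum>j\<in>UNIV. \<Sum>k\<in>UNIV. a i * (cnj (b j) * W (j, k)) * cnj (Z (i, k)))"
    by (rule sum.cong[OF refl], rule sum.swap)
  also have "\<dots> = inner_c (tensor23 a W) (tensor13 Z b)"
    unfolding inner_c_prod3 tensor23_def tensor13_def by (simp add: mult_ac)
  finally show ?thesis by simp
qed

lemma inner_c_tensor13_tensor12: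
  "inner_c (tensor13 W b) (tensor12 Z a) = inner_c ((\<lambda>i. \<Sum>k\<in>UNIV. cnj (a k) * W (i, k)) \<otimes> b) Z"
proof -
  have "inner_c ((\<lambda>i. \<Sum>k\<in>UNIV. cnj (a k) * W (i, k)) \<otimes> b) Z
     = (\<Sum>i\<in>UNIV. \<Sum>j\<in>UNIV. \<Sum>k\<in>UNIV. cnj (a k) * W (i, k) * b j * cnj (Z (i, j)))"
    unfolding inner_c_prod tensor_def by (simp add: sum_distrib_left sum_distrib_right)
  also have "\<dots> = inner_c (tensor13 W b) (tensor12 Z a)"
    unfolding inner_c_prod3 tensor12_def tensor13_def by (simp add: mult_ac)
  finally show ?thesis by simp
qed

lemma tensor12_cancel: "c j \<noteq> 0 \<Longrightarrow> tensor12 X c = tensor12 Y c \<Longrightarrow> X = Y"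
proof
  fix q :: "'a \<times> 'a"
  assume c: "c j \<noteq> 0" and eq: "tensor12 X c = tensor12 Y c"
  obtain a b where q: "q = (a, b)" by (cases q) auto
  from fun_cong[OF eq, of "(a, b, j)"] c show "X q = Y q" unfolding q tensor12_def by simp
qed

lemma tensor23_cancel: "c j \<noteq> 0 \<Longrightarrow> tensor23 c X = tensor23 c Y \<Longrightarrow> X = Y"
proof
  fix q :: "'a \<times> 'a"
  assume c: "c j \<noteq> 0" and eq: "tensor23 c X = tensor23 c Y"
  obtain a b where q: "q = (a, b)" by (cases q) auto
  from fun_cong[OF eq, of "(j, a, b)"] c show "X q = Y q" unfolding q tensor23_def by simp
qed

lemma tensor13_cancel: "c j \<noteq> 0 \<Longrightarrow> tensor13 X c = tensor13 Y c \<Longrightarrow> X = Y"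
proof
  fix q :: "'a \<times> 'a"
  assume c: "c j \<noteq> 0" and eq: "tensor13 X c = tensor13 Y c"
  obtain a b where q: "q = (a, b)" by (cases q) auto
  from fun_cong[OF eq, of "(a, j, b)"] c show "X q = Y q" unfolding q tensor13_def by simp
qed

section \<open>Slice maps of a multiplicative unitary\<close>

definition square_fixed :: "(('n::finite) \<times> 'n) mat \<Rightarrow> 'n vect \<Rightarrow> bool" where
  "square_fixed V f \<longleftrightarrow> V \<star> f \<otimes> f = f \<otimes> f"

lemma square_fixed_scale: "square_fixed V w \<Longrightarrow> square_fixed V (\<lambda>i. a * w i)"
  unfolding square_fixed_def by (simp add: tensor_scale_left tensor_scale_right mat_apply_scale)

definition left_slice :: "(('n::finite) \<times> 'n) mat \<Rightarrow> 'n vect \<Rightarrow> 'n vect \<Rightarrow> 'n vect" where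
  "left_slice V f x = (\<lambda>k. \<Sum>j\<in>UNIV. cnj (f j) * (V \<star> f \<otimes> x) (j, k))"

definition right_slice :: "(('n::finite) \<times> 'n) mat \<Rightarrow> 'n vect \<Rightarrow> 'n vect \<Rightarrow> 'n vect" where
  "right_slice V f x = (\<lambda>i. \<Sum>k\<in>UNIV. cnj (f k) * (V \<star> x \<otimes> f) (i, k))"

lemma inner_c_left_slice: "inner_c (left_slice V f x) y = inner_c (V \<star> f \<otimes> x) (f \<otimes> y)"
proof -
  let ?W = "V \<star> f \<otimes> x"
  have "inner_c ?W (f \<otimes> y) = (\<Sum>j\<in>UNIV. \<Sum>k\<in>UNIV. ?W (j, k) * cnj (f j * y k))"
    unfolding inner_c_prod tensor_def by simp
  also have "\<dots> = (\<Sum>k\<in>UNIV. \<Sum>j\<in>UNIV. ?W (j, k) * cnj (f j * y k))"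
    by (rule sum.swap)
  also have "\<dots> = (\<Sum>k\<in>UNIV. (\<Sum>j\<in>UNIV. cnj (f j) * ?W (j, k)) * cnj (y k))"
    by (simp only: sum_distrib_right) (simp add: mult_ac)
  also have "\<dots> = inner_c (left_slice V f x) y"
    unfolding inner_c_def left_slice_def by simp
  finally show ?thesis by simp
qed

lemma inner_c_right_slice: "inner_c (right_slice V f x) y = inner_c (V \<star> x \<otimes> f) (y \<otimes> f)"
proof -
  let ?W = "V \<star> x \<otimes> f"
  have "inner_c ?W (y \<otimes> f) = (\<Sum>i\<in>UNIV. \<Sum>k\<in>UNIV. ?W (i, k) * cnj (y i * f k))"
    unfolding inner_c_prod tensor_def by simp
  also have "\<dots> = (\<Sum>i\<in>UNIV. (\<Sum>k\<in>UNIV. cnj (f k) * ?W (i, k)) * cnj (y i))"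
    by (simp only: sum_distrib_right) (simp add: mult_ac)
  also have "\<dots> = inner_c (right_slice V f x) y"
    unfolding inner_c_def right_slice_def by simp
  finally show ?thesis by simp
qed

lemma left_slice_add_scale:
  "left_slice V f (\<lambda>i. x i + t * z i) = (\<lambda>i. left_slice V f x i + t * left_slice V f z i)"
  unfolding left_slice_def tensor_add_right tensor_scale_right mat_apply_add mat_apply_scale
  by (simp add: distrib_left sum.distrib sum_distrib_left mult_ac)

lemma right_slice_add_scale:
  "right_slice V f (\<lambda>i. x i + t * z i) = (\<lambda>i. right_slice V f x i + t * right_slice V f z i)"
  unfolding right_slice_def tensor_add_left tensor_scale_left mat_apply_add mat_apply_scale
  by (simp add: distrib_left sum.distrib sum_distrib_left mult_ac)

lemma left_slice_diff: "left_slice V f (\<lambda>i. x i - z i) = (\<lambda>i. left_slice V f x i - left_slice V f z i)"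
  using left_slice_add_scale[of V f x "-1" z] by simp

lemma right_slice_diff: "right_slice V f (\<lambda>i. x i - z i) = (\<lambda>i. right_slice V f x i - right_slice V f z i)"
  using right_slice_add_scale[of V f x "-1" z] by simp

lemma left_slice_eq_sum_basis_vect:
  "left_slice V f x k = (\<Sum>j\<in>UNIV. x j * left_slice V f (basis_vect j) k)"
proof -
  have "V \<star> f \<otimes> x = (\<lambda>p. \<Sum>j\<in>UNIV. x j * (V \<star> f \<otimes> basis_vect j) p)"
    by (subst tensor_eq_sum_basis_vect) (simp add: mat_apply_sum mat_apply_scale)
  then have "left_slice V f x k
      = (\<Sum>i\<in>UNIV. \<Sum>j\<in>UNIV. cnj (f i) * (x j * (V \<star> f \<otimes> basis_vect j) (i, k)))"
    unfolding left_slice_def by (simp add: sum_distrib_left)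
  also have "\<dots> = (\<Sum>j\<in>UNIV. \<Sum>i\<in>UNIV. cnj (f i) * (x j * (V \<star> f \<otimes> basis_vect j) (i, k)))"
    by (rule sum.swap)
  also have "\<dots> = (\<Sum>j\<in>UNIV. x j * left_slice V f (basis_vect j) k)"
    unfolding left_slice_def by (simp add: sum_distrib_left mult_ac)
  finally show ?thesis .
qed

locale mult_unitary =
  fixes V :: "('n::finite \<times> 'n) mat"
  assumes multiplicative_unitary: "multiplicative_unitary V"
begin

lemma unitary: "unitary_mat V"
  using multiplicative_unitary unfolding multiplicative_unitary_def by simp

lemma pentagon: "leg12 V \<star> leg13 V \<star> leg23 V \<star> X = leg23 V \<star> leg12 V \<star> X"
  using multiplicative_unitary unfolding multiplicative_unitary_def by (metis mat_apply_mult)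

lemma square_fixed_adj: "square_fixed V f \<Longrightarrow> mat_adj V \<star> f \<otimes> f = f \<otimes> f"
  unfolding square_fixed_def using unitary unitary_adj_fixed by blast

lemma left_slice_idem:
  assumes sq: "square_fixed V f" and unit: "inner_c f f = 1"
  shows "left_slice V f (left_slice V f x) = left_slice V f x"
proof (rule vect_eqI_inner_c)
  fix y
  define W where "W = V \<star> f \<otimes> x"
  define Z where "Z = mat_adj V \<star> f \<otimes> y"
  have e12: "leg12 V \<star> tensor3 f f x = tensor3 f f x"
    using sq unfolding square_fixed_def by (simp add: tensor3_eq_tensor12 leg12_apply_tensor12)
  have e23: "leg23 V \<star> tensor3 f f x = tensor23 f W"
    unfolding W_def by (simp add: tensor3_eq_tensor23 leg23_apply_tensor23)
  have pent: "leg12 V \<star> leg13 V \<star> tensor23 f W = tensor23 f W"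
    using pentagon[of "tensor3 f f x"] e12 e23 by simp
  have adj12: "mat_adj (leg12 V) \<star> tensor3 f f y = tensor3 f f y"
    using square_fixed_adj[OF sq] by (simp add: mat_adj_leg12 tensor3_eq_tensor12 leg12_apply_tensor12)
  have adj13: "mat_adj (leg13 V) \<star> tensor3 f f y = tensor13 Z f"
    unfolding Z_def by (simp add: mat_adj_leg13 tensor3_eq_tensor13 leg13_apply_tensor13)
  have "inner_c (left_slice V f (left_slice V f x)) y = inner_c (f \<otimes> left_slice V f x) Z"
    unfolding Z_def by (simp add: inner_c_left_slice inner_c_mat_apply_adj)
  also have "\<dots> = inner_c (tensor23 f W) (tensor13 Z f)"
    unfolding inner_c_tensor23_tensor13 left_slice_def W_def ..
  also have "\<dots> = inner_c (leg13 V \<star> tensor23 f W) (tensor3 f f y)"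
    by (simp add: inner_c_mat_apply_adj adj13)
  also have "\<dots> = inner_c (leg12 V \<star> leg13 V \<star> tensor23 f W) (tensor3 f f y)"
    by (simp add: inner_c_mat_apply_adj adj12)
  also have "\<dots> = inner_c (tensor23 f W) (tensor23 f (f \<otimes> y))"
    by (simp add: pent tensor3_eq_tensor23)
  also have "\<dots> = inner_c (left_slice V f x) y"
    by (simp add: inner_c_tensor23 unit inner_c_left_slice W_def)
  finally show "inner_c (left_slice V f (left_slice V f x)) y = inner_c (left_slice V f x) y" .
qed

lemma right_slice_idem:
  assumes sq: "square_fixed V f" and unit: "inner_c f f = 1"
  shows "right_slice V f (right_slice V f x) = right_slice V f x"
proof (rule vect_eqI_inner_c)
  fix y
  define W where "W = V \<star> x \<otimes> f"
  define Z where "Z = mat_adj V \<star> y \<otimes> f"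
  have e23: "leg23 V \<star> tensor3 x f f = tensor3 x f f"
    using sq unfolding square_fixed_def by (simp add: tensor3_eq_tensor23 leg23_apply_tensor23)
  have e13: "leg13 V \<star> tensor3 x f f = tensor13 W f"
    unfolding W_def by (simp add: tensor3_eq_tensor13 leg13_apply_tensor13)
  have pent: "leg12 V \<star> tensor13 W f = leg23 V \<star> leg12 V \<star> tensor3 x f f"
    using pentagon[of "tensor3 x f f"] e23 e13 by simp
  have adj23: "mat_adj (leg23 V) \<star> tensor3 y f f = tensor3 y f f"
    using square_fixed_adj[OF sq] by (simp add: mat_adj_leg23 tensor3_eq_tensor23 leg23_apply_tensor23)
  have adj12: "mat_adj (leg12 V) \<star> tensor3 y f f = tensor12 Z f"
    unfolding Z_def by (simp add: mat_adj_leg12 tensor3_eq_tensor12 leg12_apply_tensor12)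
  have "inner_c (right_slice V f (right_slice V f x)) y = inner_c (right_slice V f x \<otimes> f) Z"
    unfolding Z_def by (simp add: inner_c_right_slice inner_c_mat_apply_adj)
  also have "\<dots> = inner_c (tensor13 W f) (tensor12 Z f)"
    unfolding inner_c_tensor13_tensor12 right_slice_def W_def ..
  also have "\<dots> = inner_c (leg12 V \<star> tensor13 W f) (tensor3 y f f)"
    by (simp add: inner_c_mat_apply_adj adj12)
  also have "\<dots> = inner_c (leg12 V \<star> tensor3 x f f) (tensor3 y f f)"
    by (simp add: pent inner_c_mat_apply_adj adj23)
  also have "\<dots> = inner_c (tensor12 W f) (tensor12 (y \<otimes> f) f)"
    by (simp add: tensor3_eq_tensor12 leg12_apply_tensor12 W_def)
  also have "\<dots> = inner_c (right_slice V f x) y"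
    by (simp add: inner_c_tensor12 unit inner_c_right_slice W_def)
  finally show "inner_c (right_slice V f (right_slice V f x)) y = inner_c (right_slice V f x) y" .
qed

lemma norm_sq_left_slice_le:
  assumes "inner_c f f = 1"
  shows "norm_sq (left_slice V f x) \<le> norm_sq x"
proof -
  have "norm_sq (left_slice V f x) = Re (inner_c (V \<star> f \<otimes> x) (f \<otimes> left_slice V f x))"
    unfolding norm_sq_def inner_c_left_slice ..
  also have "\<dots> \<le> (norm_sq (V \<star> f \<otimes> x) + norm_sq (f \<otimes> left_slice V f x)) / 2"
    by (rule Re_inner_c_le)
  also have "\<dots> = (norm_sq x + norm_sq (left_slice V f x)) / 2"
    using assms by (simp add: unitary_norm_sq[OF unitary] norm_sq_tensor norm_sq_def[of f])
  finally show ?thesis by simp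
qed

lemma left_slice_fixed_iff:
  assumes unit: "inner_c f f = 1"
  shows "left_slice V f y = y \<longleftrightarrow> V \<star> f \<otimes> y = f \<otimes> y"
proof
  assume "left_slice V f y = y"
  then show "V \<star> f \<otimes> y = f \<otimes> y"
    by (intro eq_if_Re_inner_c_eq)
      (simp_all add: unitary_norm_sq[OF unitary] inner_c_left_slice[symmetric] unitary_inner_c[OF unitary]
        inner_c_tensor unit norm_sq_def)
next
  assume "V \<star> f \<otimes> y = f \<otimes> y"
  then show "left_slice V f y = y"
    by (intro vect_eqI_inner_c) (simp add: inner_c_left_slice inner_c_tensor unit)
qed

lemma right_slice_fixed_iff:
  assumes unit: "inner_c f f = 1"
  shows "right_slice V f y = y \<longleftrightarrow> V \<star> y \<otimes> f = y \<otimes> f"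
proof
  assume "right_slice V f y = y"
  then show "V \<star> y \<otimes> f = y \<otimes> f"
    by (intro eq_if_Re_inner_c_eq)
      (simp_all add: unitary_norm_sq[OF unitary] inner_c_right_slice[symmetric] unitary_inner_c[OF unitary]
        inner_c_tensor unit norm_sq_def)
next
  assume "V \<star> y \<otimes> f = y \<otimes> f"
  then show "right_slice V f y = y"
    by (intro vect_eqI_inner_c) (simp add: inner_c_right_slice inner_c_tensor unit)
qed

lemma left_slice_fixed_orthogonal_kernel:
  assumes "inner_c f f = 1" and "left_slice V f y = y" and "left_slice V f z = (\<lambda>i. 0)"
  shows "inner_c y z = 0"
  using assms
  by (intro inner_c_orthogonal_if_contraction_projection[of "left_slice V f"])
    (auto simp: left_slice_add_scale norm_sq_left_slice_le)

lemma square_fixed_flip_left: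
  assumes sq: "square_fixed V f" and "f j \<noteq> 0" and flip: "V \<star> f \<otimes> u = w \<otimes> f"
  shows "V \<star> f \<otimes> w = f \<otimes> w"
proof -
  have sq': "V \<star> f \<otimes> f = f \<otimes> f" using sq unfolding square_fixed_def .
  have "leg23 V \<star> tensor3 f f u = tensor3 f w f"
    by (simp add: tensor3_eq_tensor23 leg23_apply_tensor23 flip)
  moreover have "leg13 V \<star> tensor3 f w f = tensor3 f w f"
    by (simp add: tensor3_eq_tensor13 leg13_apply_tensor13 sq')
  moreover have "leg12 V \<star> tensor3 f w f = tensor12 (V \<star> f \<otimes> w) f"
    by (simp add: tensor3_eq_tensor12 leg12_apply_tensor12)
  moreover have "leg12 V \<star> tensor3 f f u = tensor3 f f u"
    by (simp add: tensor3_eq_tensor12 leg12_apply_tensor12 sq')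
  ultimately have "tensor12 (V \<star> f \<otimes> w) f = tensor12 (f \<otimes> w) f"
    using pentagon[of "tensor3 f f u"] by (simp add: tensor3_eq_tensor12)
  then show ?thesis by (rule tensor12_cancel[of f j, OF \<open>f j \<noteq> 0\<close>])
qed

lemma square_fixed_flip_right:
  assumes sq: "square_fixed V f" and "f j \<noteq> 0" and flip: "V \<star> u \<otimes> f = f \<otimes> w"
  shows "V \<star> w \<otimes> f = f \<otimes> w"
proof -
  have sq': "V \<star> f \<otimes> f = f \<otimes> f" using sq unfolding square_fixed_def .
  have "leg23 V \<star> tensor3 u f f = tensor3 u f f"
    by (simp add: tensor3_eq_tensor23 leg23_apply_tensor23 sq')
  moreover have "leg13 V \<star> tensor3 u f f = tensor3 f f w"
    by (simp add: tensor3_eq_tensor13 leg13_apply_tensor13 flip)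
  moreover have "leg12 V \<star> tensor3 f f w = tensor3 f f w"
    by (simp add: tensor3_eq_tensor12 leg12_apply_tensor12 sq')
  moreover have "leg12 V \<star> tensor3 u f f = tensor3 f w f"
    by (simp add: tensor3_eq_tensor12 leg12_apply_tensor12 flip)
  moreover have "leg23 V \<star> tensor3 f w f = tensor23 f (V \<star> w \<otimes> f)"
    by (simp add: tensor3_eq_tensor23 leg23_apply_tensor23)
  ultimately have "tensor23 f (f \<otimes> w) = tensor23 f (V \<star> w \<otimes> f)"
    using pentagon[of "tensor3 u f f"] by (simp add: tensor3_eq_tensor23)
  then show ?thesis by (metis tensor23_cancel[of f j, OF \<open>f j \<noteq> 0\<close>])
qed

lemma fixed_tensor_through:
  assumes "f j \<noteq> 0" and left: "V \<star> a \<otimes> f = a \<otimes> f" and right: "V \<star> f \<otimes> b = f \<otimes> b"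
  shows "V \<star> a \<otimes> b = a \<otimes> b"
proof -
  have "leg23 V \<star> tensor3 a f b = tensor3 a f b"
    by (simp add: tensor3_eq_tensor23 leg23_apply_tensor23 right)
  moreover have "leg13 V \<star> tensor3 a f b = tensor13 (V \<star> a \<otimes> b) f"
    by (simp add: tensor3_eq_tensor13 leg13_apply_tensor13)
  moreover have "leg12 V \<star> tensor3 a f b = tensor3 a f b"
    by (simp add: tensor3_eq_tensor12 leg12_apply_tensor12 left)
  ultimately have pent: "leg12 V \<star> tensor13 (V \<star> a \<otimes> b) f = tensor3 a f b"
    using pentagon[of "tensor3 a f b"] by simp
  have left_adj: "mat_adj V \<star> a \<otimes> f = a \<otimes> f"
    using left unitary unitary_adj_fixed by blast
  have "tensor13 (V \<star> a \<otimes> b) f = leg12 (mat_adj V) \<star> tensor3 a f b"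
    using unitary_leg12_adj_apply[OF unitary, of "tensor13 (V \<star> a \<otimes> b) f"] pent by simp
  also have "\<dots> = tensor13 (a \<otimes> b) f"
    by (simp add: tensor3_eq_tensor12 leg12_apply_tensor12 left_adj tensor3_eq_tensor13[symmetric])
  finally show ?thesis by (rule tensor13_cancel[of f j, OF \<open>f j \<noteq> 0\<close>])
qed

lemma tangent_in_slice_kernels_eq_0:
  assumes sq: "square_fixed V f" and unit: "inner_c f f = 1"
    and a_ker: "left_slice V f a = (\<lambda>i. 0)" and b_ker: "right_slice V f b = (\<lambda>i. 0)"
    and tangent: "\<And>p. (V \<star> f \<otimes> a) p + (V \<star> b \<otimes> f) p = (f \<otimes> a) p + (b \<otimes> f) p"
  shows "a = (\<lambda>i. 0)" and "b = (\<lambda>i. 0)"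
proof -
  obtain j where "f j \<noteq> 0" using ex_nonzero_if_inner_c_self_eq_1[OF unit] by blast
  have "left_slice V f f = f"
    using sq left_slice_fixed_iff[OF unit] unfolding square_fixed_def by blast
  then have "inner_c a f = 0"
    using left_slice_fixed_orthogonal_kernel[OF unit _ a_ker] inner_c_commute[of f a] by simp
  then have orth_ab: "inner_c (f \<otimes> a) (b \<otimes> f) = 0"
    unfolding inner_c_tensor by simp
  have orth_a: "inner_c (V \<star> f \<otimes> a) (f \<otimes> a) = 0"
    unfolding inner_c_left_slice[symmetric] a_ker by (rule inner_c_zero_left)
  have orth_b: "inner_c (V \<star> b \<otimes> f) (b \<otimes> f) = 0"
    unfolding inner_c_right_slice[symmetric] b_ker by (rule inner_c_zero_left)
  have "norm_sq (V \<star> f \<otimes> a) = norm_sq (f \<otimes> a)" and "norm_sq (V \<star> b \<otimes> f) = norm_sq (b \<otimes> f)"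
    by (simp_all add: unitary_norm_sq[OF unitary])
  then have flip_a: "V \<star> f \<otimes> a = b \<otimes> f" and flip_b: "V \<star> b \<otimes> f = f \<otimes> a"
    using eq_swap_if_orthogonal[OF tangent _ _ orth_a orth_b orth_ab] by blast+
  have "V \<star> f \<otimes> b = f \<otimes> b"
    by (rule square_fixed_flip_left[OF sq \<open>f j \<noteq> 0\<close> flip_a])
  then have b_fixed: "left_slice V f b = b"
    using left_slice_fixed_iff[OF unit] by blast
  have "V \<star> a \<otimes> f = V \<star> b \<otimes> f"
    using square_fixed_flip_right[OF sq \<open>f j \<noteq> 0\<close> flip_b] flip_b by simp
  then have "a \<otimes> f = b \<otimes> f"
    by (rule unitary_apply_inj[OF unitary])
  then have "a = b"
    by (rule tensor_cancel_left[of f j, OF \<open>f j \<noteq> 0\<close>])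
  then show "a = (\<lambda>i. 0)" and "b = (\<lambda>i. 0)"
    using a_ker b_fixed by simp_all
qed

lemma tangent_fixed_by_slices:
  assumes sq: "square_fixed V f" and unit: "inner_c f f = 1"
    and tangent: "\<And>p. (V \<star> f \<otimes> d) p + (V \<star> d \<otimes> f) p = (f \<otimes> d) p + (d \<otimes> f) p"
  shows "left_slice V f d = d" and "right_slice V f d = d"
proof -
  define a where "a = (\<lambda>i. d i - left_slice V f d i)"
  define b where "b = (\<lambda>i. d i - right_slice V f d i)"
  have a_ker: "left_slice V f a = (\<lambda>i. 0)"
    unfolding a_def left_slice_diff left_slice_idem[OF sq unit] by simp
  have b_ker: "right_slice V f b = (\<lambda>i. 0)"
    unfolding b_def right_slice_diff right_slice_idem[OF sq unit] by simp
  have left_fixed: "V \<star> f \<otimes> left_slice V f d = f \<otimes> left_slice V f d"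
    using left_slice_idem[OF sq unit] left_slice_fixed_iff[OF unit] by blast
  have right_fixed: "V \<star> right_slice V f d \<otimes> f = right_slice V f d \<otimes> f"
    using right_slice_idem[OF sq unit] right_slice_fixed_iff[OF unit] by blast
  have "(V \<star> f \<otimes> a) p + (V \<star> b \<otimes> f) p = (f \<otimes> a) p + (b \<otimes> f) p" for p
  proof -
    have "(V \<star> f \<otimes> a) p + (V \<star> b \<otimes> f) p
        = ((V \<star> f \<otimes> d) p + (V \<star> d \<otimes> f) p) - (f \<otimes> left_slice V f d) p - (right_slice V f d \<otimes> f) p"
      unfolding a_def b_def tensor_diff_left tensor_diff_right mat_apply_diff left_fixed right_fixed
      by simp
    also have "\<dots> = (f \<otimes> a) p + (b \<otimes> f) p"
      unfolding tangent a_def b_def tensor_diff_left tensor_diff_right by simp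
    finally show ?thesis .
  qed
  then have "a = (\<lambda>i. 0)" and "b = (\<lambda>i. 0)"
    using tangent_in_slice_kernels_eq_0[OF sq unit a_ker b_ker] by blast+
  then show "left_slice V f d = d" and "right_slice V f d = d"
    unfolding a_def b_def by (simp_all add: fun_eq_iff)
qed

end

section \<open>The normalised partial trace\<close>

definition partial_trace_mean :: "(('n::finite) \<times> 'n) mat \<Rightarrow> 'n mat" where
  "partial_trace_mean V = (\<lambda>i i'. (\<Sum>j\<in>UNIV. V (i, j) (i', j)) / of_nat CARD('n))"

lemma mat_apply_tensor_basis_vect: "(V \<star> x \<otimes> basis_vect j) (i, l) = (\<Sum>a\<in>UNIV. V (i, l) (a, j) * x a)"
proof -
  have "(V \<star> x \<otimes> basis_vect j) (i, l) = (\<Sum>a\<in>UNIV. \<Sum>b\<in>UNIV. (V (i, l) (a, b) * x a) * basis_vect j b)"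
    unfolding mat_apply_def sum_UNIV_prod tensor_def by (simp add: mult_ac)
  also have "\<dots> = (\<Sum>a\<in>UNIV. V (i, l) (a, j) * x a)"
    by (simp only: sum_mult_basis_vect)
  finally show ?thesis .
qed

lemma inner_c_tensor_basis_vect: "inner_c X (y \<otimes> basis_vect j) = (\<Sum>i\<in>UNIV. X (i, j) * cnj (y i))"
proof -
  have "inner_c X (y \<otimes> basis_vect j) = (\<Sum>i\<in>UNIV. cnj (y i) * (\<Sum>k\<in>UNIV. cnj (basis_vect j k) * X (i, k)))"
    unfolding inner_c_prod tensor_def by (simp add: sum_distrib_left mult_ac)
  then show ?thesis
    unfolding sum_cnj_basis_vect_mult by (simp add: mult.commute)
qed

lemma partial_trace_mean_apply:
  fixes V :: "('n::finite \<times> 'n) mat"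
  shows "(partial_trace_mean V \<star> x) i = (\<Sum>j\<in>UNIV. (V \<star> x \<otimes> basis_vect j) (i, j)) / of_nat CARD('n)"
  unfolding mat_apply_tensor_basis_vect unfolding partial_trace_mean_def mat_apply_def
  by (simp add: sum_divide_distrib sum_distrib_right) (rule sum.swap)

lemma inner_c_partial_trace_mean:
  fixes V :: "('n::finite \<times> 'n) mat"
  shows "inner_c (partial_trace_mean V \<star> x) y
    = (\<Sum>j\<in>UNIV. inner_c (V \<star> x \<otimes> basis_vect j) (y \<otimes> basis_vect j)) / of_nat CARD('n)"
proof -
  have "inner_c (partial_trace_mean V \<star> x) y
      = (\<Sum>i\<in>UNIV. \<Sum>j\<in>UNIV. (V \<star> x \<otimes> basis_vect j) (i, j) * cnj (y i)) / of_nat CARD('n)"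
    unfolding inner_c_def partial_trace_mean_apply by (simp add: sum_divide_distrib sum_distrib_right)
  also have "\<dots> = (\<Sum>j\<in>UNIV. \<Sum>i\<in>UNIV. (V \<star> x \<otimes> basis_vect j) (i, j) * cnj (y i)) / of_nat CARD('n)"
    by (subst sum.swap) (rule refl)
  finally show ?thesis unfolding inner_c_tensor_basis_vect .
qed

lemma sum_rotate3: "(\<Sum>a\<in>A. \<Sum>b\<in>B. \<Sum>c\<in>C. f a b c) = (\<Sum>b\<in>B. \<Sum>c\<in>C. \<Sum>a\<in>A. f a b c)"
  by (subst sum.swap) (rule sum.cong[OF refl], rule sum.swap)

lemma inner_c_leg12_tensor23:
  "inner_c (leg12 V \<star> tensor23 x W) (tensor23 y W)
    = (\<Sum>k\<in>UNIV. inner_c (V \<star> x \<otimes> (\<lambda>j. W (j, k))) (y \<otimes> (\<lambda>j. W (j, k))))"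
proof -
  have "(leg12 V \<star> tensor23 x W) (i, j, k) = (V \<star> x \<otimes> (\<lambda>j. W (j, k))) (i, j)" for i j k
  proof -
    have "(\<lambda>q. tensor23 x W (fst q, snd q, k)) = x \<otimes> (\<lambda>j. W (j, k))"
      unfolding tensor23_def tensor_def by auto
    then show ?thesis unfolding leg12_apply_slice by simp
  qed
  moreover have "tensor23 y W (i, j, k) = (y \<otimes> (\<lambda>j. W (j, k))) (i, j)" for i j k
    unfolding tensor23_def tensor_def by simp
  ultimately have "inner_c (leg12 V \<star> tensor23 x W) (tensor23 y W)
     = (\<Sum>i\<in>UNIV. \<Sum>j\<in>UNIV. \<Sum>k\<in>UNIV. (V \<star> x \<otimes> (\<lambda>j. W (j, k))) (i, j) * cnj ((y \<otimes> (\<lambda>j. W (j, k))) (i, j)))"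
    unfolding inner_c_prod3 by simp
  also have "\<dots> = (\<Sum>k\<in>UNIV. \<Sum>i\<in>UNIV. \<Sum>j\<in>UNIV. (V \<star> x \<otimes> (\<lambda>j. W (j, k))) (i, j) * cnj ((y \<otimes> (\<lambda>j. W (j, k))) (i, j)))"
    by (rule sum_rotate3[symmetric])
  finally show ?thesis unfolding inner_c_prod .
qed

definition compression :: "(('n::finite) \<times> 'n) mat \<Rightarrow> 'n vect \<Rightarrow> 'n vect \<Rightarrow> 'n mat" where
  "compression V x y = (\<lambda>j j'. \<Sum>i\<in>UNIV. \<Sum>i'\<in>UNIV. cnj (y i) * V (i, j) (i', j') * x i')"

lemma inner_c_tensor_compression:
  "inner_c (V \<star> x \<otimes> w) (y \<otimes> w) = (\<Sum>j\<in>UNIV. \<Sum>j'\<in>UNIV. compression V x y j j' * w j' * cnj (w j))"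
proof -
  have "inner_c (V \<star> x \<otimes> w) (y \<otimes> w)
     = (\<Sum>i\<in>UNIV. \<Sum>j\<in>UNIV. \<Sum>i'\<in>UNIV. \<Sum>j'\<in>UNIV. cnj (y i) * V (i, j) (i', j') * x i' * w j' * cnj (w j))"
    unfolding inner_c_prod mat_apply_def sum_UNIV_prod tensor_def
    by (simp add: sum_distrib_left sum_distrib_right mult_ac)
  also have "\<dots> = (\<Sum>j\<in>UNIV. \<Sum>i\<in>UNIV. \<Sum>i'\<in>UNIV. \<Sum>j'\<in>UNIV. cnj (y i) * V (i, j) (i', j') * x i' * w j' * cnj (w j))"
    by (rule sum.swap)
  also have "\<dots> = (\<Sum>j\<in>UNIV. \<Sum>j'\<in>UNIV. \<Sum>i\<in>UNIV. \<Sum>i'\<in>UNIV. cnj (y i) * V (i, j) (i', j') * x i' * w j' * cnj (w j))"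
    by (rule sum.cong[OF refl], rule sum_rotate3[symmetric])
  also have "\<dots> = (\<Sum>j\<in>UNIV. \<Sum>j'\<in>UNIV. compression V x y j j' * w j' * cnj (w j))"
    unfolding compression_def by (simp add: sum_distrib_left sum_distrib_right mult_ac)
  finally show ?thesis .
qed

lemma unitary_columns_orthonormal:
  assumes "unitary_mat U"
  shows "(\<Sum>q\<in>UNIV. (U \<star> basis_vect q) p' * cnj ((U \<star> basis_vect q) p)) = (if p' = p then 1 else 0)"
proof -
  have "(\<Sum>q\<in>UNIV. (U \<star> basis_vect q) p' * cnj ((U \<star> basis_vect q) p)) = mat_mult U (mat_adj U) p' p"
    unfolding mat_apply_basis_vect mat_mult_def mat_adj_def ..
  also have "\<dots> = (if p' = p then 1 else 0)"
    using assms unfolding unitary_mat_def mat_id_def by simp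
  finally show ?thesis .
qed

text \<open>Basis independence of the trace: the left-hand side is a trace over the last two legs,
  computed in the orthonormal basis of columns of \<open>U\<close>.\<close>

lemma sum_inner_c_leg12_unitary_basis:
  fixes U :: "('n::finite \<times> 'n) mat"
  assumes "unitary_mat U"
  shows "(\<Sum>q\<in>UNIV. inner_c (leg12 V \<star> tensor23 x (U \<star> basis_vect q)) (tensor23 y (U \<star> basis_vect q)))
    = of_nat CARD('n) * of_nat CARD('n) * inner_c (partial_trace_mean V \<star> x) y"
proof -
  define W where "W = (\<lambda>q. U \<star> basis_vect q)"
  define S where "S = compression V x y"
  have "(\<Sum>q\<in>UNIV. inner_c (leg12 V \<star> tensor23 x (W q)) (tensor23 y (W q)))
      = (\<Sum>q\<in>UNIV. \<Sum>k\<in>UNIV. \<Sum>j\<in>UNIV. \<Sum>j'\<in>UNIV. S j j' * W q (j', k) * cnj (W q (j, k)))"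
    unfolding inner_c_leg12_tensor23 inner_c_tensor_compression S_def ..
  also have "\<dots> = (\<Sum>k\<in>UNIV. \<Sum>j\<in>UNIV. \<Sum>j'\<in>UNIV. \<Sum>q\<in>UNIV. S j j' * W q (j', k) * cnj (W q (j, k)))"
    by (subst sum_rotate3) (rule sum.cong[OF refl], rule sum.cong[OF refl], rule sum.swap)
  also have "\<dots> = (\<Sum>k\<in>(UNIV::'n set). \<Sum>j\<in>UNIV. \<Sum>j'\<in>UNIV. S j j' * (if j' = j then 1 else 0))"
    unfolding W_def mult.assoc sum_distrib_left[symmetric] unitary_columns_orthonormal[OF assms]
    by simp
  also have "\<dots> = of_nat CARD('n) * (\<Sum>j\<in>UNIV. S j j)"
    by (simp add: if_distrib[where f="\<lambda>z. _ * z"] cong: if_cong)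
  also have "(\<Sum>j\<in>UNIV. S j j) = (\<Sum>i\<in>UNIV. \<Sum>i'\<in>UNIV. \<Sum>j\<in>UNIV. cnj (y i) * V (i, j) (i', j) * x i')"
    unfolding S_def compression_def by (rule sum_rotate3)
  also have "\<dots> = of_nat CARD('n) * inner_c (partial_trace_mean V \<star> x) y"
    unfolding inner_c_def partial_trace_mean_def mat_apply_def
    by (simp add: sum_distrib_left sum_distrib_right sum_divide_distrib mult_ac)
  finally show ?thesis unfolding W_def by (simp add: mult_ac)
qed

lemma fixed_vectors_if_fixed_on_basis:
  assumes "\<And>j. V \<star> z \<otimes> basis_vect j = z \<otimes> basis_vect j"
  shows "z \<in> fixed_vectors V"
  unfolding fixed_vectors_def
proof (intro CollectI allI)
  fix \<eta>
  have "V \<star> z \<otimes> \<eta> = (\<lambda>p. \<Sum>j\<in>UNIV. \<eta> j * (V \<star> z \<otimes> basis_vect j) p)"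
    by (subst tensor_eq_sum_basis_vect) (simp add: mat_apply_sum mat_apply_scale)
  also have "\<dots> = z \<otimes> \<eta>"
    using assms tensor_eq_sum_basis_vect[symmetric] by simp
  finally show "V \<star> z \<otimes> \<eta> = z \<otimes> \<eta>" .
qed

context mult_unitary
begin

lemma inner_c_leg12_tensor23_adj_basis_vect:
  "inner_c (V \<star> (\<lambda>i. (V \<star> x \<otimes> basis_vect c) (i, c)) \<otimes> basis_vect b) (y \<otimes> basis_vect b)
   = inner_c (leg12 V \<star> tensor23 x (mat_adj V \<star> basis_vect (b, c))) (tensor23 y (mat_adj V \<star> basis_vect (b, c)))"
proof -
  define W where "W = mat_adj V \<star> basis_vect (b, c)"
  define z where "z = tensor3 y (basis_vect b) (basis_vect c)"
  have "leg23 V \<star> tensor23 x W = tensor3 x (basis_vect b) (basis_vect c)"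
    unfolding W_def tensor3_eq_tensor23 leg23_apply_tensor23 tensor_basis_vect
    by (simp add: unitary_apply_adj[OF unitary])
  then have pent: "leg12 V \<star> leg13 V \<star> tensor3 x (basis_vect b) (basis_vect c) = leg23 V \<star> leg12 V \<star> tensor23 x W"
    using pentagon[of "tensor23 x W"] by simp
  have adj23: "mat_adj (leg23 V) \<star> z = tensor23 y W"
    unfolding W_def z_def by (simp add: mat_adj_leg23 tensor3_eq_tensor23 leg23_apply_tensor23 tensor_basis_vect)
  have adj12: "mat_adj (leg12 V) \<star> z = tensor12 (mat_adj V \<star> y \<otimes> basis_vect b) (basis_vect c)"
    unfolding z_def by (simp add: mat_adj_leg12 tensor3_eq_tensor12 leg12_apply_tensor12)
  have leg13: "leg13 V \<star> tensor3 x (basis_vect b) (basis_vect c) = tensor13 (V \<star> x \<otimes> basis_vect c) (basis_vect b)"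
    by (simp add: tensor3_eq_tensor13 leg13_apply_tensor13)
  have "inner_c (leg12 V \<star> tensor23 x W) (tensor23 y W) = inner_c (leg23 V \<star> leg12 V \<star> tensor23 x W) z"
    by (simp add: inner_c_mat_apply_adj adj23)
  also have "\<dots> = inner_c (leg13 V \<star> tensor3 x (basis_vect b) (basis_vect c)) (mat_adj (leg12 V) \<star> z)"
    by (simp add: pent[symmetric] inner_c_mat_apply_adj)
  also have "\<dots> = inner_c ((\<lambda>i. (V \<star> x \<otimes> basis_vect c) (i, c)) \<otimes> basis_vect b) (mat_adj V \<star> y \<otimes> basis_vect b)"
    unfolding leg13 adj12 inner_c_tensor13_tensor12 sum_cnj_basis_vect_mult ..
  also have "\<dots> = inner_c (V \<star> (\<lambda>i. (V \<star> x \<otimes> basis_vect c) (i, c)) \<otimes> basis_vect b) (y \<otimes> basis_vect b)"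
    by (simp add: inner_c_mat_apply_adj)
  finally show ?thesis unfolding W_def by simp
qed

lemma partial_trace_mean_idem:
  "partial_trace_mean V \<star> partial_trace_mean V \<star> x = partial_trace_mean V \<star> x"
proof (rule vect_eqI_inner_c)
  fix y
  let ?F = "partial_trace_mean V"
  define N :: complex where "N = of_nat CARD('n)"
  have "N \<noteq> 0" unfolding N_def by simp
  define g where "g = (\<lambda>c i. (V \<star> x \<otimes> basis_vect c) (i, c))"
  have "(\<lambda>i. \<Sum>c\<in>UNIV. g c i) = (\<lambda>i. N * (?F \<star> x) i)"
    unfolding g_def N_def partial_trace_mean_apply by simp
  then have g_sum: "(\<lambda>i. \<Sum>c\<in>UNIV. (?F \<star> g c) i) = (\<lambda>i. N * (?F \<star> ?F \<star> x) i)"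
    unfolding mat_apply_sum[symmetric] mat_apply_scale[symmetric] by simp
  have "N * N * inner_c (?F \<star> x) y
      = (\<Sum>q\<in>UNIV. inner_c (leg12 V \<star> tensor23 x (mat_adj V \<star> basis_vect q)) (tensor23 y (mat_adj V \<star> basis_vect q)))"
    unfolding N_def sum_inner_c_leg12_unitary_basis[OF unitary_mat_adj[OF unitary]] ..
  also have "\<dots> = (\<Sum>c\<in>UNIV. \<Sum>b\<in>UNIV. inner_c (V \<star> g c \<otimes> basis_vect b) (y \<otimes> basis_vect b))"
    unfolding sum_UNIV_prod inner_c_leg12_tensor23_adj_basis_vect[symmetric] g_def by (rule sum.swap)
  also have "\<dots> = (\<Sum>c\<in>UNIV. N * inner_c (?F \<star> g c) y)"
    unfolding inner_c_partial_trace_mean N_def by simp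
  also have "\<dots> = N * N * inner_c (?F \<star> ?F \<star> x) y"
    unfolding sum_distrib_left[symmetric] inner_c_sum_left[symmetric] g_sum inner_c_scale_left
    by (simp add: mult.assoc)
  finally show "inner_c (?F \<star> ?F \<star> x) y = inner_c (?F \<star> x) y"
    using \<open>N \<noteq> 0\<close> by simp
qed

lemma fixed_vectors_if_partial_trace_mean_fixed:
  assumes fixed: "partial_trace_mean V \<star> z = z"
  shows "z \<in> fixed_vectors V"
proof (rule fixed_vectors_if_fixed_on_basis)
  fix j
  define r where "r = (\<lambda>j. Re (inner_c (V \<star> z \<otimes> basis_vect j) (z \<otimes> basis_vect j)))"
  have r_le: "r j' \<le> norm_sq z" for j'
  proof -
    have "r j' \<le> (norm_sq (V \<star> z \<otimes> basis_vect j') + norm_sq (z \<otimes> basis_vect j')) / 2"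
      unfolding r_def by (rule Re_inner_c_le)
    also have "\<dots> = norm_sq z" by (simp add: unitary_norm_sq[OF unitary] norm_sq_tensor norm_sq_basis_vect)
    finally show ?thesis .
  qed
  \<comment> \<open>\<open>\<langle>z, z\<rangle>\<close> is the mean of the \<open>r j\<close>, each of which is at most \<open>\<langle>z, z\<rangle>\<close>.\<close>
  have "of_nat CARD('n) * inner_c z z = (\<Sum>j\<in>UNIV. inner_c (V \<star> z \<otimes> basis_vect j) (z \<otimes> basis_vect j))"
    using inner_c_partial_trace_mean[of V z z] fixed by simp
  then have "of_nat CARD('n) * norm_sq z = (\<Sum>j\<in>UNIV. r j)"
    unfolding r_def inner_c_self Re_sum[symmetric]
    by (metis Re_complex_of_real of_real_mult of_real_of_nat_eq)
  then have "(\<Sum>j\<in>UNIV. norm_sq z - r j) = 0"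
    by (simp add: sum_subtractf)
  then have "r j = norm_sq z"
    using sum_nonneg_eq_0_iff[of UNIV "\<lambda>j. norm_sq z - r j"] r_le by simp
  then show "V \<star> z \<otimes> basis_vect j = z \<otimes> basis_vect j"
    by (intro eq_if_Re_inner_c_eq)
      (simp_all add: r_def unitary_norm_sq[OF unitary] norm_sq_tensor norm_sq_basis_vect)
qed

lemma partial_trace_mean_inner_c_eq_sum_norm_sq:
  assumes sq: "square_fixed V u" and unit: "inner_c u u = 1"
  shows "of_nat CARD('n) * inner_c (partial_trace_mean V \<star> u) u
    = of_real (\<Sum>j\<in>UNIV. norm_sq (left_slice V u (basis_vect j)))"
proof -
  have "inner_c (V \<star> u \<otimes> basis_vect j) (u \<otimes> basis_vect j) = of_real (norm_sq (left_slice V u (basis_vect j)))"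
    for j
  proof -
    let ?q = "left_slice V u (basis_vect j)"
    have "left_slice V u ?q = ?q" by (rule left_slice_idem[OF sq unit])
    moreover have "left_slice V u (\<lambda>i. basis_vect j i - ?q i) = (\<lambda>i. 0)"
      unfolding left_slice_diff left_slice_idem[OF sq unit] by simp
    ultimately have "inner_c ?q (\<lambda>i. basis_vect j i - ?q i) = 0"
      by (rule left_slice_fixed_orthogonal_kernel[OF unit])
    then have "inner_c ?q (basis_vect j) = inner_c ?q ?q"
      unfolding inner_c_diff_right by simp
    then show ?thesis
      unfolding inner_c_left_slice[symmetric] inner_c_self by simp
  qed
  then show ?thesis
    unfolding inner_c_partial_trace_mean of_real_sum by simp
qed

text \<open>The sum of the last lemma is the rank of the projection \<open>left_slice V u\<close>, which is
  positive because \<open>u\<close> is in its range.\<close>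

lemma partial_trace_mean_inner_c_neq_0:
  assumes sq: "square_fixed V u" and unit: "inner_c u u = 1"
  shows "inner_c (partial_trace_mean V \<star> u) u \<noteq> 0"
proof
  assume "inner_c (partial_trace_mean V \<star> u) u = 0"
  then have "(\<Sum>j\<in>UNIV. norm_sq (left_slice V u (basis_vect j))) = 0"
    using partial_trace_mean_inner_c_eq_sum_norm_sq[OF sq unit] by (metis mult_zero_right of_real_eq_0_iff)
  then have "norm_sq (left_slice V u (basis_vect j)) = 0" for j
    by (subst (asm) sum_nonneg_eq_0_iff) (auto intro: norm_sq_nonneg)
  then have "left_slice V u (basis_vect j) = (\<lambda>i. 0)" for j
    by (rule norm_sq_eq_0D)
  then have "left_slice V u u = (\<lambda>i. 0)"
    by (simp add: fun_eq_iff left_slice_eq_sum_basis_vect[of V u u])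
  moreover have "left_slice V u u = u"
    using sq left_slice_fixed_iff[OF unit] unfolding square_fixed_def by blast
  ultimately show False
    using unit inner_c_zero_left[of u] by (metis zero_neq_one)
qed

end

section \<open>Multiplicity one\<close>

locale mult_unitary_mult_one = mult_unitary V for V :: "('n::finite \<times> 'n) mat" +
  fixes e :: "'n vect"
  assumes multiplicity_one: "multiplicity_one V"
    and e_fixed: "e \<in> fixed_vectors V" and e_unit: "vnorm e = 1"
begin

lemma fixed_vectors_multipleE:
  assumes "z \<in> fixed_vectors V"
  obtains c where "z = (\<lambda>i. c * e i)"
proof -
  obtain v where fixed: "fixed_vectors V = {\<xi>. \<exists>c::complex. \<xi> = (\<lambda>i. c * v i)}"
    using multiplicity_one unfolding multiplicity_one_def by blast
  obtain c where c: "z = (\<lambda>i. c * v i)" using assms fixed by blast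
  obtain c' where c': "e = (\<lambda>i. c' * v i)" using e_fixed fixed by blast
  have "c' \<noteq> 0"
    using c' inner_c_self_eq_1_if_vnorm_eq_1[OF e_unit] inner_c_zero_left[of e] by auto
  then have "z = (\<lambda>i. (c / c') * e i)" using c c' by (auto simp: fun_eq_iff)
  then show ?thesis by (rule that)
qed

lemma inner_c_e_neq_0:
  assumes sq: "square_fixed V u" and unit: "inner_c u u = 1"
  shows "inner_c u e \<noteq> 0"
proof
  assume "inner_c u e = 0"
  have "partial_trace_mean V \<star> u \<in> fixed_vectors V"
    by (rule fixed_vectors_if_partial_trace_mean_fixed[OF partial_trace_mean_idem])
  then obtain c where "partial_trace_mean V \<star> u = (\<lambda>i. c * e i)"
    by (rule fixed_vectors_multipleE)
  then have "inner_c (partial_trace_mean V \<star> u) u = c * cnj (inner_c u e)"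
    by (simp add: inner_c_scale_left inner_c_commute[of e u])
  then show False
    using partial_trace_mean_inner_c_neq_0[OF sq unit] \<open>inner_c u e = 0\<close> by simp
qed

lemma square_fixed_orthogonal_e_eq_0:
  assumes sq: "square_fixed V w" and "inner_c w e = 0"
  shows "w = (\<lambda>i. 0)"
proof (rule ccontr)
  assume "w \<noteq> (\<lambda>i. 0)"
  then have pos: "norm_sq w > 0"
    using norm_sq_nonneg[of w] norm_sq_eq_0D[of w] by fastforce
  define a :: complex where "a = of_real (1 / sqrt (norm_sq w))"
  have "inner_c (\<lambda>i. a * w i) (\<lambda>i. a * w i) = a * cnj a * inner_c w w"
    unfolding inner_c_scale_left inner_c_scale_right by (simp add: mult.assoc)
  also have "\<dots> = of_real ((1 / sqrt (norm_sq w)) * (1 / sqrt (norm_sq w)) * norm_sq w)"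
    unfolding a_def inner_c_self by (simp only: complex_cnj_complex_of_real of_real_mult)
  also have "(1 / sqrt (norm_sq w)) * (1 / sqrt (norm_sq w)) * norm_sq w = 1"
    using pos by (simp add: field_simps)
  finally have "inner_c (\<lambda>i. a * w i) (\<lambda>i. a * w i) = 1" by simp
  then have "inner_c (\<lambda>i. a * w i) e \<noteq> 0"
    by (rule inner_c_e_neq_0[OF square_fixed_scale[OF sq]])
  then show False
    using \<open>inner_c w e = 0\<close> by (simp add: inner_c_scale_left)
qed

lemma tangent_trivial:
  assumes sq: "square_fixed V f" and unit: "inner_c f f = 1"
    and real: "Im (inner_c f e) = 0"
    and tangent: "\<And>p. (V \<star> f \<otimes> d) p + (V \<star> d \<otimes> f) p = (f \<otimes> d) p + (d \<otimes> f) p"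
    and "Re (inner_c d f) = 0" and "Im (inner_c d e) = 0"
  shows "d = (\<lambda>i. 0)"
proof -
  obtain j where "f j \<noteq> 0" using ex_nonzero_if_inner_c_self_eq_1[OF unit] by blast
  have "inner_c f e \<noteq> 0" by (rule inner_c_e_neq_0[OF sq unit])
  define c where "c = inner_c d e / inner_c f e"
  define w where "w = (\<lambda>i. d i + (- c) * f i)"
  have "left_slice V f f = f" and "right_slice V f f = f"
    using sq left_slice_fixed_iff[OF unit] right_slice_fixed_iff[OF unit]
    unfolding square_fixed_def by blast+
  then have "left_slice V f w = w" and "right_slice V f w = w"
    unfolding w_def left_slice_add_scale right_slice_add_scale
      tangent_fixed_by_slices[OF sq unit tangent] by simp_all
  then have "square_fixed V w"
    unfolding square_fixed_def using left_slice_fixed_iff[OF unit] right_slice_fixed_iff[OF unit]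
      fixed_tensor_through[of f j, OF \<open>f j \<noteq> 0\<close>] by metis
  moreover have "inner_c w e = 0"
    unfolding w_def inner_c_add_left inner_c_scale_left c_def using \<open>inner_c f e \<noteq> 0\<close> by simp
  ultimately have "w = (\<lambda>i. 0)"
    by (rule square_fixed_orthogonal_e_eq_0)
  then have d_eq: "d = (\<lambda>i. c * f i)"
    unfolding w_def by (simp add: fun_eq_iff algebra_simps)
  have "Im c = 0"
    unfolding c_def using real \<open>Im (inner_c d e) = 0\<close> by (simp add: Im_divide)
  moreover have "Re c = 0"
    using \<open>Re (inner_c d f) = 0\<close> unfolding d_eq inner_c_scale_left unit by simp
  ultimately have "c = 0"
    by (simp add: complex_eq_iff)
  then show ?thesis
    unfolding d_eq by simp
qed

end

section \<open>Isolation of unit solutions\<close>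

lemma norm_eq_vnorm_vec_nth: "norm x = vnorm (vec_nth x)"
  unfolding norm_vec_def L2_set_def vnorm_def by simp

lemma norm_power2_eq_norm_sq_vec_nth: "(norm x)\<^sup>2 = norm_sq (vec_nth x)"
  unfolding norm_eq_vnorm_vec_nth vnorm_eq_sqrt_norm_sq using norm_sq_nonneg by simp

lemma norm_vec_lambda: "norm (vec_lambda X) = vnorm X"
  unfolding norm_eq_vnorm_vec_nth by (simp add: vec_lambda_inverse)

lemma square_fixed_linearization:
  assumes f: "square_fixed V f" and g: "square_fixed V (\<lambda>i. f i + d i)"
  shows "(V \<star> f \<otimes> d) p + (V \<star> d \<otimes> f) p - (f \<otimes> d) p - (d \<otimes> f) p = (d \<otimes> d) p - (V \<star> d \<otimes> d) p"
proof -
  have "(V \<star> f \<otimes> f) p + (V \<star> f \<otimes> d) p + ((V \<star> d \<otimes> f) p + (V \<star> d \<otimes> d) p)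
      = (f \<otimes> f) p + (f \<otimes> d) p + ((d \<otimes> f) p + (d \<otimes> d) p)"
    using fun_cong[OF g[unfolded square_fixed_def], of p]
    unfolding tensor_add_left tensor_add_right mat_apply_add by simp
  moreover have "(V \<star> f \<otimes> f) p = (f \<otimes> f) p"
    using f unfolding square_fixed_def by simp
  ultimately show ?thesis
    by (simp add: algebra_simps)
qed

context mult_unitary_mult_one
begin

text \<open>The real-linear map whose kernel is the tangent space at \<open>f\<close> of the real variety of
  vectors \<open>g\<close> with \<open>V (g \<otimes> g) = g \<otimes> g\<close>, \<open>\<langle>g, g\<rangle> = 1\<close> and \<open>\<langle>g, e\<rangle>\<close> real.\<close>

definition tangent_map :: "'n vect \<Rightarrow> complex^'n \<Rightarrow> (complex^('n \<times> 'n)) \<times> real \<times> real" where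
  "tangent_map f y =
    ((\<chi> p. (V \<star> f \<otimes> vec_nth y) p + (V \<star> vec_nth y \<otimes> f) p - (f \<otimes> vec_nth y) p - (vec_nth y \<otimes> f) p),
     Re (inner_c (vec_nth y) f), Im (inner_c (vec_nth y) e))"

definition real_unit_solutions :: "(complex^'n) set" where
  "real_unit_solutions = {y. square_fixed V (vec_nth y) \<and> norm y = 1 \<and> Im (inner_c (vec_nth y) e) = 0}"

lemma linear_tangent_map: "linear (tangent_map f)"
proof (rule linearI)
  fix y z :: "complex^'n"
  have add: "vec_nth (y + z) = (\<lambda>i. vec_nth y i + vec_nth z i)" by (simp add: fun_eq_iff)
  show "tangent_map f (y + z) = tangent_map f y + tangent_map f z"
    unfolding tangent_map_def add tensor_add_left tensor_add_right mat_apply_add inner_c_add_left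
    by (simp add: vec_eq_iff algebra_simps)
next
  fix c :: real and y :: "complex^'n"
  have scale: "vec_nth (c *\<^sub>R y) = (\<lambda>i. of_real c * vec_nth y i)"
    by (rule ext) (simp only: vector_scaleR_component, simp add: scaleR_conv_of_real)
  show "tangent_map f (c *\<^sub>R y) = c *\<^sub>R tangent_map f y"
    unfolding tangent_map_def scale tensor_scale_left tensor_scale_right mat_apply_scale inner_c_scale_left
    by (simp add: vec_eq_iff algebra_simps) (simp add: scaleR_conv_of_real algebra_simps)
qed

lemma inj_tangent_map:
  assumes "x \<in> real_unit_solutions"
  shows "inj (tangent_map (vec_nth x))"
  unfolding linear_injective_0[OF linear_tangent_map]
proof (intro allI impI)
  let ?f = "vec_nth x"
  fix y assume "tangent_map ?f y = 0"
  then have "(V \<star> ?f \<otimes> vec_nth y) p + (V \<star> vec_nth y \<otimes> ?f) p = (?f \<otimes> vec_nth y) p + (vec_nth y \<otimes> ?f) p"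
    and "Re (inner_c (vec_nth y) ?f) = 0" and "Im (inner_c (vec_nth y) e) = 0" for p
    unfolding tangent_map_def by (auto simp: vec_eq_iff zero_prod_def algebra_simps simp del: split_paired_All)
  moreover have "square_fixed V ?f" and "inner_c ?f ?f = 1" and "Im (inner_c ?f e) = 0"
    using assms inner_c_self_eq_1_if_vnorm_eq_1
    unfolding real_unit_solutions_def norm_eq_vnorm_vec_nth by auto
  ultimately have "vec_nth y = (\<lambda>i. 0)"
    using tangent_trivial by blast
  then show "y = 0" by (simp add: vec_eq_iff)
qed

text \<open>Along the variety the tangent map is of second order, since its first component is the
  quadratic part \<open>d \<otimes> d - V (d \<otimes> d)\<close> of the defining equation.\<close>

lemma norm_tangent_map_diff_le:
  assumes x: "x \<in> real_unit_solutions" and y: "y \<in> real_unit_solutions"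
  shows "norm (tangent_map (vec_nth x) (y - x)) \<le> 5 / 2 * (norm (y - x))\<^sup>2"
proof -
  define f where "f = vec_nth x"
  define d where "d = vec_nth (y - x)"
  have y_eq: "vec_nth y = (\<lambda>i. f i + d i)" unfolding f_def d_def by (simp add: fun_eq_iff)
  have "square_fixed V f" and "square_fixed V (\<lambda>i. f i + d i)"
    using x y unfolding real_unit_solutions_def y_eq[symmetric] by (auto simp: f_def)
  then have "fst (tangent_map f (y - x)) = vec_lambda (d \<otimes> d) - vec_lambda (V \<star> d \<otimes> d)"
    unfolding tangent_map_def d_def[symmetric] by (simp add: vec_eq_iff square_fixed_linearization)
  then have fst_le: "norm (fst (tangent_map f (y - x))) \<le> 2 * norm_sq d"
    using norm_triangle_ineq4[of "vec_lambda (d \<otimes> d)" "vec_lambda (V \<star> d \<otimes> d)"] norm_sq_nonneg[of d]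
    by (simp add: norm_vec_lambda vnorm_eq_sqrt_norm_sq unitary_norm_sq[OF unitary] norm_sq_tensor)
  have "inner_c f f = 1" and "inner_c (\<lambda>i. f i + d i) (\<lambda>i. f i + d i) = 1"
    using x y inner_c_self_eq_1_if_vnorm_eq_1
    unfolding real_unit_solutions_def y_eq[symmetric] norm_eq_vnorm_vec_nth by (auto simp: f_def)
  then have "Re (inner_c d f) = - norm_sq d / 2"
    by (rule Re_inner_c_eq_if_unit_sum)
  moreover have "Im (inner_c d e) = 0"
  proof -
    have "d = (\<lambda>i. vec_nth y i - f i)" unfolding d_def f_def by (simp add: fun_eq_iff)
    then show ?thesis
      using x y unfolding real_unit_solutions_def f_def by (simp add: inner_c_diff_left)
  qed
  ultimately have "norm (snd (tangent_map f (y - x))) = norm_sq d / 2"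
    unfolding tangent_map_def d_def[symmetric] using norm_sq_nonneg[of d] by simp
  then show ?thesis
    using norm_Pair_le[of "fst (tangent_map f (y - x))" "snd (tangent_map f (y - x))"] fst_le
      norm_power2_eq_norm_sq_vec_nth[of "y - x"]
    unfolding f_def d_def by simp
qed

lemma isolated_in_real_unit_solutions:
  assumes x: "x \<in> real_unit_solutions"
  shows "x isolated_in real_unit_solutions"
proof -
  obtain B where "B > 0" and B: "\<And>z. B * norm z \<le> norm (tangent_map (vec_nth x) z)"
    using linear_inj_bounded_below_pos[OF linear_tangent_map inj_tangent_map[OF x]] by blast
  have "y = x" if y: "y \<in> real_unit_solutions" and close: "dist x y < 2 * B / 5" for y
  proof (rule ccontr)
    assume "y \<noteq> x"
    then have "norm (y - x) > 0" by simp
    have "B * norm (y - x) \<le> 5 / 2 * (norm (y - x))\<^sup>2"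
      using B[of "y - x"] norm_tangent_map_diff_le[OF x y] by linarith
    then have "2 * B / 5 \<le> norm (y - x)"
      using \<open>norm (y - x) > 0\<close> by (simp add: power2_eq_square field_simps)
    then show False
      using close by (simp add: dist_norm norm_minus_commute)
  qed
  then show ?thesis
    unfolding isolated_in_dist_Ex_iff using x \<open>B > 0\<close>
    by (metis zero_less_divide_iff mult_pos_pos zero_less_numeral)
qed

lemma closed_real_unit_solutions: "closed real_unit_solutions"
proof -
  have cont_V: "continuous_on UNIV (\<lambda>y::complex^'n. (V \<star> vec_nth y \<otimes> vec_nth y) p)"
    and cont_tensor: "continuous_on UNIV (\<lambda>y::complex^'n. (vec_nth y \<otimes> vec_nth y) p)"
    and cont_inner: "continuous_on UNIV (\<lambda>y::complex^'n. inner_c (vec_nth y) e)" for p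
    unfolding mat_apply_def tensor_apply inner_c_def by (intro continuous_intros)+
  have "closed {y. (\<forall>p. (V \<star> vec_nth y \<otimes> vec_nth y) p = (vec_nth y \<otimes> vec_nth y) p)
      \<and> norm y = 1 \<and> Im (inner_c (vec_nth y) e) = 0}"
    by (intro closed_Collect_conj closed_Collect_all closed_Collect_eq cont_V cont_tensor
        continuous_on_Im cont_inner continuous_intros)
  then show ?thesis
    unfolding real_unit_solutions_def square_fixed_def fun_eq_iff .
qed

lemma finite_real_unit_solutions: "finite real_unit_solutions"
proof -
  have "bounded real_unit_solutions"
    unfolding real_unit_solutions_def bounded_iff by auto
  then have "compact real_unit_solutions"
    using closed_real_unit_solutions compact_eq_bounded_closed by blast
  moreover have "discrete real_unit_solutions"
    using isolated_in_real_unit_solutions by (rule discreteI)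
  ultimately show ?thesis
    using discrete_compact_finite_iff by blast
qed

lemma finite_pre_subgroups: "finite (pre_subgroups V e)"
proof -
  have "pre_subgroups V e \<subseteq> vec_nth ` real_unit_solutions"
  proof
    fix g assume "g \<in> pre_subgroups V e"
    then have "vec_lambda g \<in> real_unit_solutions"
      unfolding pre_subgroups_def real_unit_solutions_def square_fixed_def
      by (simp add: vec_lambda_inverse norm_vec_lambda)
    moreover have "g = vec_nth (vec_lambda g)"
      by (simp add: vec_lambda_inverse)
    ultimately show "g \<in> vec_nth ` real_unit_solutions"
      by (rule rev_image_eqI)
  qed
  then show ?thesis
    using finite_subset finite_imageI[OF finite_real_unit_solutions] by blast
qed

end

theorem corollary3p6:
  fixes V :: "('n::finite \<times> 'n) mat" and e :: "'n vect"
  assumes "multiplicative_unitary V"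
    and "multiplicity_one V"
    and "e \<in> fixed_vectors V" and "vnorm e = 1"
  shows "finite (pre_subgroups V e)"
proof -
  interpret mult_unitary_mult_one V e
    using assms by unfold_locales
  show ?thesis by (rule finite_pre_subgroups)
qed

end
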